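(* Fix an integer $N\ge 1$. For real $\mu$, let $\ell^2_\mu\subset\mathbb{C}^\infty$ be the space of sequences $\mathbf u=(u_0,u_1,\dots)$ with norm $\|\mathbf u\|_{\ell^2_\mu}=\bigl(\sum_{k\ge0}|u_k|^2(k+1)^{2\mu}\bigr)^{1/2}<\infty$. Let $\mathcal L$ be the operator on Chebyshev coefficient sequences $$\mathcal L=\mathcal D_N+\sum_{\lambda=1}^{N-1}\mathcal S_{N-1}\cdots\mathcal S_\lambda\,\mathcal M_\lambda[a^\lambda]\,\mathcal D_\lambda+\mathcal S_{N-1}\cdots\mathcal S_0\,\mathcal M_0[a^0],$$ representing the $N$th order differential operator $u\mapsto u^{(N)}+\sum_{\lambda=0}^{N-1}a^\lambda(x)u^{(\lambda)}$ on $[-1,1]$ (leading coefficient $a^N\equiv1$), where the operators $\mathcal D_\lambda,\mathcal S_\lambda,\mathcal M_\lambda$ are as defined in the context. Let $\mathcal B$ be a linear operator from sequences to $\mathbb{C}^N$ (representing exactly $N$ boundary conditions in terms of Chebyshev coefficients), and let $D$ be an integer such that $\mathcal B:\ell^2_D\to\mathbb{C}^N$ is bounded. Let $$\mathcal R=\frac{1}{2^{N-1}(N-1)!}\,\mathrm{diag}\Bigl(\underbrace{1,\dots,1}_{N\text{ times}},\tfrac1N,\tfrac1{N+1},\tfrac1{N+2},\dots\Bigr).$$ Then $$\begin{pmatrix}\mathcal B\\ \mathcal L\end{pmatrix}\mathcal R=I+\mathcal K,$$ where $\mathcal K:\ell^2_\lambda\to\ell^2_\lambda$ is compact for every $\l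ambda\in\{D-1,D,D+1,\dots\}$.
   Context: Chebyshev polynomials are $T_k(x)=\cos(k\arccos x)$. For integers $\lambda\ge1$, the ultraspherical polynomials $C^{(\lambda)}_k$ are orthogonal on $[-1,1]$ with respect to the weight $(1-x^2)^{\lambda-1/2}$, normalized so that $C^{(\lambda)}_k(x)=\frac{2^k(\lambda)_k}{k!}x^k+O(x^{k-1})$ with $(\lambda)_k=\frac{(\lambda+k-1)!}{(\lambda-1)!}$; set $C^{(0)}_k:=T_k$ for convenience. All operators act on coefficient sequences indexed from $0$. The differentiation operator $\mathcal D_\lambda$ ($\lambda\ge1$) maps Chebyshev coefficients of $u$ to $C^{(\lambda)}$ coefficients of $u^{(\lambda)}$: $(\mathcal D_\lambda\mathbf u)_j=2^{\lambda-1}(\lambda-1)!\,(j+\lambda)\,u_{j+\lambda}$. The conversion operator $\mathcal S_0$ maps Chebyshev coefficients to $C^{(1)}$ coefficients: $(\mathcal S_0\mathbf u)_0=u_0-\tfrac12u_2$, $(\mathcal S_0\mathbf u)_j=\tfrac12(u_j-u_{j+2})$ for $j\ge1$. For $\lambda\ge1$, $\mathcal S_\lambda$ maps $C^{(\lambda)}$ coefficients to $C^{(\lambda+1)}$ coefficients: $(\mathcal S_\lambda\mathbf v)_j=\frac{\lambda}{\lambda+j}v_j-\frac{\lambda}{\lambda+j+2}v_{j+2}$. For a function $a$, $\mathcal M_\lambda[a]$ ($\lambda\ge0$) is the operator mapping the $C^{(\lambda)}$ coefficients of a function $v$ to the $C^{(\lambda)}$ coefficients of the product $a v$. $\begin{pmatrix}\mathcal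 B\\ \mathcal L\end{pmatrix}$ denotes the operator whose output is the $N$ entries of $\mathcal B\mathbf u$ followed by the sequence $\mathcal L\mathbf u$. Standing assumption: the coefficient functions $a^0,\dots,a^{N-1}$ are sufficiently smooth (in practice replaced by finite truncated expansions) so that each $\mathcal M_\lambda[a^\lambda]$ is a bounded operator on every $\ell^2_\mu$. *)

theory Defs
  imports "HOL-Analysis.Analysis" "HOL-Computational_Algebra.Polynomial"
begin

type_synonym cseq = "nat \<Rightarrow> complex"

definition in_l2 :: "real \<Rightarrow> cseq \<Rightarrow> bool" where
  "in_l2 mu u \<longleftrightarrow> summable (\<lambda>k. (cmod (u k))^2 * (real k + 1) powr (2 * mu))"

definition l2norm :: "real \<Rightarrow> cseq \<Rightarrow> real" where
  "l2norm mu u = sqrt (\<Sum>k. (cmod (u k))^2 * (real k + 1) powr (2 * mu))"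

definition cheb :: "nat \<Rightarrow> real poly" where
  "cheb k = (THE p. \<forall>x\<in>{-1..1}. poly p x = cos (real k * arccos x))"

definition ultra_cond :: "nat \<Rightarrow> nat \<Rightarrow> real poly \<Rightarrow> bool" where
  "ultra_cond lam k p \<longleftrightarrow>
     degree p = k \<and> coeff p k = 2 ^ k * pochhammer (real lam) k / fact k \<and>
     (\<forall>q :: real poly. degree q < k \<longrightarrow>
        integral {-1..1} (\<lambda>x. poly p x * poly q x * (1 - x^2) powr (real lam - 1/2)) = 0)"

definition ultra :: "nat \<Rightarrow> nat \<Rightarrow> real poly" where
  "ultra lam k = (if lam = 0 then cheb k else (THE p. ultra_cond lam k p))"

definition ultraC :: "nat \<Rightarrow> nat \<Rightarrow> complex poly" where
  "ultraC lam k = map_poly complex_of_real (ultra lam k)"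

definition gcoef :: "nat \<Rightarrow> complex poly \<Rightarrow> nat \<Rightarrow> complex" where
  "gcoef lam p = (THE c. (\<forall>i > degree p. c i = 0) \<and>
                          p = (\<Sum>i\<le>degree p. smult (c i) (ultraC lam i)))"

definition Dop :: "nat \<Rightarrow> cseq \<Rightarrow> cseq" where
  "Dop lam u j = of_real (2 ^ (lam - 1) * fact (lam - 1) * real (j + lam)) * u (j + lam)"

definition Sop :: "nat \<Rightarrow> cseq \<Rightarrow> cseq" where
  "Sop lam v j =
     (if lam = 0 then
        (if j = 0 then v 0 - v 2 / 2 else (v j - v (j + 2)) / 2)
      else of_real (real lam / real (lam + j)) * v j
           - of_real (real lam / real (lam + j + 2)) * v (j + 2))"

text \<open>Schain lo n = S_(lo+n-1) o ... o S_lo  (identity for n = 0).\<close>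
fun Schain :: "nat \<Rightarrow> nat \<Rightarrow> cseq \<Rightarrow> cseq" where
  "Schain lo 0 = id"
| "Schain lo (Suc n) = Sop (lo + n) \<circ> Schain lo n"

text \<open>Multiplication operator M_lam[a]: C^(lam) coefficients of v to those of a*v.\<close>
definition Mop :: "nat \<Rightarrow> complex poly \<Rightarrow> cseq \<Rightarrow> cseq" where
  "Mop lam a v j = (\<Sum>k. gcoef lam (a * ultraC lam k) j * v k)"

definition Lop :: "nat \<Rightarrow> (nat \<Rightarrow> complex poly) \<Rightarrow> cseq \<Rightarrow> cseq" where
  "Lop N a u j =
     Dop N u j
     + (\<Sum>lam\<in>{1..N-1}. Schain lam (N - lam) (Mop lam (a lam) (Dop lam u)) j)
     + Schain 0 N (Mop 0 (a 0) u) j"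

definition blockop :: "nat \<Rightarrow> (cseq \<Rightarrow> cseq) \<Rightarrow> (cseq \<Rightarrow> cseq) \<Rightarrow> cseq \<Rightarrow> cseq" where
  "blockop N B L u j = (if j < N then B u j else L u (j - N))"

definition Rop :: "nat \<Rightarrow> cseq \<Rightarrow> cseq" where
  "Rop N u j = of_real (1 / (2 ^ (N - 1) * fact (N - 1))) *
               (if j < N then u j else u j / of_nat j)"

definition compact_op_l2 :: "real \<Rightarrow> (cseq \<Rightarrow> cseq) \<Rightarrow> bool" where
  "compact_op_l2 mu K \<longleftrightarrow>
     (\<forall>u. in_l2 mu u \<longrightarrow> in_l2 mu (K u)) \<and>
     (\<forall>u v c. in_l2 mu u \<longrightarrow> in_l2 mu v \<longrightarrow> K (\<lambda>k. c * u k + v k) = (\<lambda>k. c * K u k + K v k)) \<and>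
     (\<forall>us :: nat \<Rightarrow> cseq. (\<forall>n. in_l2 mu (us n)) \<longrightarrow> bounded (range (\<lambda>n. l2norm mu (us n))) \<longrightarrow>
        (\<exists>r w. strict_mono r \<and> in_l2 mu w \<and>
               (\<lambda>n. l2norm mu (\<lambda>k. K (us (r n)) k - w k)) \<longlonglongrightarrow> 0))"

end

(* Since D_N R is exactly the shift by N rows, (B; L) R - I consists of the N boundary rows
   B R - I and of the shifted lower-order terms S_{N-1} ... S_lam M_lam[a^lam] D_lam R.
   The three-term recurrence x C_k = alpha_k C_{k+1} + beta_k C_{k-1}, with |alpha_k|, |beta_k| <= 1,
   makes each M_lam[a] banded and bounded; D_lam R is banded and bounded, while S_lam (lam >= 1)
   and R are banded with entries decaying like 1/j.  A banded operator whose entries decay is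
   compact on every l2_mu: a bounded sequence has a coordinatewise convergent subsequence, and the
   tails of the images are uniformly small.  The boundary rows have finite rank, and they are
   bounded on l2_mu for mu >= D - 1 because R maps l2_mu boundedly into l2_D. *)

theory Submission
  imports Defs "HOL-Library.Diagonal_Subsequence" "HOL-Real_Asymp.Real_Asymp"
begin

fun cheb_poly :: "nat \<Rightarrow> real poly" where
  "cheb_poly 0 = 1"
| "cheb_poly (Suc 0) = [:0, 1:]"
| "cheb_poly (Suc (Suc n)) = smult 2 (pCons 0 (cheb_poly (Suc n))) - cheb_poly n"

lemma poly_cheb_poly_cos: "poly (cheb_poly n) (cos t) = cos (real n * t)"
proof (induction n rule: cheb_poly.induct)
  case (3 n)
  have "cos (real (Suc (Suc n)) * t) + cos (real n * t) = 2 * cos t * cos (real (Suc n) * t)"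
    using cos_add[of "real (Suc n) * t" t] cos_diff[of "real (Suc n) * t" t]
    by (simp add: algebra_simps)
  with 3 show ?case by (simp add: algebra_simps)
qed auto

lemma cheb_poly_degree_coeff:
  "degree (cheb_poly n) = n \<and> coeff (cheb_poly n) n = (if n = 0 then 1 else 2 ^ (n - 1))"
proof (induction n rule: cheb_poly.induct)
  case (3 n)
  have "cheb_poly (Suc n) \<noteq> 0"
    using 3 by (metis coeff_0 power_not_zero zero_neq_numeral nat.distinct(1))
  then have "degree (smult 2 (pCons 0 (cheb_poly (Suc n)))) = Suc (Suc n)"
    using 3 by simp
  then have "degree (cheb_poly (Suc (Suc n))) = Suc (Suc n)"
    using 3 by (metis cheb_poly.simps(3) degree_add_eq_left diff_conv_add_uminus degree_minus
        lessI less_SucI)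
  moreover have "coeff (cheb_poly n) (Suc (Suc n)) = 0"
    using 3 by (simp add: coeff_eq_0)
  ultimately show ?case using 3 by auto
qed auto

lemma cheb_eq_cheb_poly: "cheb n = cheb_poly n"
proof -
  have cheb_poly_arccos: "poly (cheb_poly n) x = cos (real n * arccos x)" if "x \<in> {-1..1}" for x
    using poly_cheb_poly_cos[of n "arccos x"] that by (simp add: cos_arccos)
  have "p = cheb_poly n" if "\<forall>x\<in>{-1..1}. poly p x = cos (real n * arccos x)" for p
  proof -
    have "{-1..1::real} \<subseteq> {x. poly (p - cheb_poly n) x = 0}"
      using that cheb_poly_arccos by auto
    moreover have "infinite {-1..1::real}" by (rule infinite_Icc) simp
    ultimately have "infinite {x. poly (p - cheb_poly n) x = 0}"
      using finite_subset by blast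
    then have "p - cheb_poly n = 0" using poly_roots_finite by blast
    then show ?thesis by simp
  qed
  then show ?thesis
    unfolding cheb_def using cheb_poly_arccos by (intro the_equality) blast+
qed

lemma pCons_0_cheb_poly:
  "pCons 0 (cheb_poly k) = smult (if k = 0 then 1 else 1/2) (cheb_poly (Suc k))
     + smult (if k = 0 then 0 else 1/2) (cheb_poly (k - 1))"
  by (cases k) (simp_all add: smult_diff_right)

section \<open>Gegenbauer polynomials\<close>

fun gegenbauer :: "nat \<Rightarrow> nat \<Rightarrow> real poly" where
  "gegenbauer l 0 = 1"
| "gegenbauer l (Suc 0) = [:0, 2 * real l:]"
| "gegenbauer l (Suc (Suc n)) = smult (1 / (real n + 2))
     (smult (2 * (real n + 1 + real l)) (pCons 0 (gegenbauer l (Suc n)))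
      - smult (real n + 2 * real l) (gegenbauer l n))"

lemma poly_gegenbauer_rec:
  "(real n + 2) * poly (gegenbauer l (Suc (Suc n))) x =
   2 * (real n + 1 + real l) * x * poly (gegenbauer l (Suc n)) x
   - (real n + 2 * real l) * poly (gegenbauer l n) x"
  by (simp add: field_simps)

lemma poly_pderiv_gegenbauer_rec:
  "(real n + 2) * poly (pderiv (gegenbauer l (Suc (Suc n)))) x =
   2 * (real n + 1 + real l) * (poly (gegenbauer l (Suc n)) x + x * poly (pderiv (gegenbauer l (Suc n))) x)
   - (real n + 2 * real l) * poly (pderiv (gegenbauer l n)) x"
  by (simp add: pderiv_diff pderiv_smult pderiv_pCons field_simps)

lemma gegenbauer_degree_coeff:
  assumes "l \<ge> 1"
  shows "degree (gegenbauer l k) = k \<and>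
         coeff (gegenbauer l k) k = 2 ^ k * pochhammer (real l) k / fact k"
  using assms
proof (induction l k rule: gegenbauer.induct)
  case (3 l n)
  then have IH: "degree (gegenbauer l (Suc n)) = Suc n"
      "coeff (gegenbauer l (Suc n)) (Suc n) = 2^(Suc n) * pochhammer (real l) (Suc n) / fact (Suc n)"
      "degree (gegenbauer l n) = n"
    by auto
  have "0 < pochhammer (real l) (Suc n)" using 3 by (intro pochhammer_pos) simp
  then have "gegenbauer l (Suc n) \<noteq> 0" using IH(2) by auto
  then have "degree (smult (2 * (real n + 1 + real l)) (pCons 0 (gegenbauer l (Suc n))))
      = Suc (Suc n)"
    using IH(1) by simp
  moreover have "degree (smult (real n + 2 * real l) (gegenbauer l n)) < Suc (Suc n)"
    using IH(3) by (metis degree_smult_le le_less_trans lessI less_SucI)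
  ultimately have "degree (smult (2 * (real n + 1 + real l)) (pCons 0 (gegenbauer l (Suc n)))
      - smult (real n + 2 * real l) (gegenbauer l n)) = Suc (Suc n)"
    by (metis degree_add_eq_left diff_conv_add_uminus degree_minus)
  then have deg: "degree (gegenbauer l (Suc (Suc n))) = Suc (Suc n)" by simp
  have "coeff (gegenbauer l n) (Suc (Suc n)) = 0" using IH(3) by (simp add: coeff_eq_0)
  then have "coeff (gegenbauer l (Suc (Suc n))) (Suc (Suc n)) =
     1 / (real n + 2) * (2 * (real n + 1 + real l) *
       (2 ^ Suc n * pochhammer (real l) (Suc n) / fact (Suc n)))"
    using IH(2) by simp
  also have "\<dots> = 2 ^ Suc (Suc n) * pochhammer (real l) (Suc (Suc n)) / fact (Suc (Suc n))"
    by (simp add: pochhammer_Suc field_simps)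
  finally show ?case using deg by simp
qed simp_all

lemma gegenbauer_deriv_lower:
  "(1 - x^2) * poly (pderiv (gegenbauer l (Suc n))) x =
   - (real n + 1) * x * poly (gegenbauer l (Suc n)) x + (real n + 2 * real l) * poly (gegenbauer l n) x"
proof (induction n arbitrary: x rule: induct_nat_012)
  case 0
  show ?case by (simp add: pderiv_pCons algebra_simps power2_eq_square)
next
  case 1
  show ?case by (simp add: pderiv_pCons pderiv_diff pderiv_smult field_simps power2_eq_square)
next
  case (ge2 m)
  let ?G = "\<lambda>j. poly (gegenbauer l j) x" and ?G' = "\<lambda>j. poly (pderiv (gegenbauer l j)) x"
  have IH1: "(1 - x^2) * ?G' (Suc m) = - (real m + 1) * x * ?G (Suc m) + (real m + 2 * real l) * ?G m"
    using ge2.IH(1) .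
  have IH2: "(1 - x^2) * ?G' (Suc (Suc m)) =
      - (real m + 2) * x * ?G (Suc (Suc m)) + (real m + 1 + 2 * real l) * ?G (Suc m)"
    using ge2.IH(2)[of x] by (simp add: algebra_simps)
  have R1: "(real m + 2) * ?G (Suc (Suc m)) =
      2 * (real m + 1 + real l) * x * ?G (Suc m) - (real m + 2 * real l) * ?G m"
    by (rule poly_gegenbauer_rec)
  have R2: "(real m + 3) * ?G (Suc (Suc (Suc m))) =
      2 * (real m + 2 + real l) * x * ?G (Suc (Suc m)) - (real m + 1 + 2 * real l) * ?G (Suc m)"
    using poly_gegenbauer_rec[of "Suc m" l x] by (simp add: algebra_simps)
  have D2: "(real m + 3) * ?G' (Suc (Suc (Suc m))) =
      2 * (real m + 2 + real l) * (?G (Suc (Suc m)) + x * ?G' (Suc (Suc m)))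
      - (real m + 1 + 2 * real l) * ?G' (Suc m)"
    using poly_pderiv_gegenbauer_rec[of "Suc m" l x] by (simp add: algebra_simps)
  from IH1 IH2 R1 R2 D2
  have "(real m + 3) * ((1 - x^2) * ?G' (Suc (Suc (Suc m)))) = (real m + 3) *
      (- (real m + 3) * x * ?G (Suc (Suc (Suc m))) + (real m + 2 + 2 * real l) * ?G (Suc (Suc m)))"
    by algebra
  then have "(1 - x^2) * ?G' (Suc (Suc (Suc m))) =
      - (real m + 3) * x * ?G (Suc (Suc (Suc m))) + (real m + 2 + 2 * real l) * ?G (Suc (Suc m))"
    by (simp del: gegenbauer.simps)
  then show ?case by (simp add: algebra_simps del: gegenbauer.simps)
qed

lemma gegenbauer_deriv_raise:
  "(1 - x^2) * poly (pderiv (gegenbauer l n)) x =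
   (real n + 2 * real l) * x * poly (gegenbauer l n) x - (real n + 1) * poly (gegenbauer l (Suc n)) x"
proof (cases n)
  case (Suc m)
  then show ?thesis
    using gegenbauer_deriv_lower[of x l m] poly_gegenbauer_rec[of m l x] by (simp add: algebra_simps)
qed simp

lemma gegenbauer_ode:
  "(1 - x^2) * poly (pderiv (pderiv (gegenbauer l k))) x
     - (2 * real l + 1) * x * poly (pderiv (gegenbauer l k)) x
     + real k * (real k + 2 * real l) * poly (gegenbauer l k) x = 0"
proof (cases k)
  case (Suc m)
  define G where "G = gegenbauer l (Suc m)"
  define q :: "real poly" where "q = [:1, 0, -1:]"
  define E where "E = q * pderiv (pderiv G) - smult (2 * real l + 1) (pCons 0 (pderiv G))
     + smult (real (Suc m) * (real (Suc m) + 2 * real l)) G"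
  have poly_q: "poly q y = 1 - y^2" for y by (simp add: q_def power2_eq_square)
  have poly_E: "poly E y = (1 - y^2) * poly (pderiv (pderiv G)) y
      - (2 * real l + 1) * y * poly (pderiv G) y + real (Suc m) * (real (Suc m) + 2 * real l) * poly G y"
    for y by (simp add: E_def poly_q)
  have lower: "q * pderiv G =
      smult (- (real m + 1)) (pCons 0 G) + smult (real m + 2 * real l) (gegenbauer l m)"
    by (rule poly_ext) (simp only: poly_mult poly_q G_def gegenbauer_deriv_lower, simp)
  have "pderiv (q * pderiv G) = pderiv (smult (- (real m + 1)) (pCons 0 G)
      + smult (real m + 2 * real l) (gegenbauer l m))"
    by (simp only: lower)
  then have "poly (q * pderiv (pderiv G) + pderiv G * pderiv q) y = poly (smult (- (real m + 1))
      (pderiv (pCons 0 G)) + smult (real m + 2 * real l) (pderiv (gegenbauer l m))) y" for y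
    by (simp only: pderiv_mult pderiv_add pderiv_smult)
  then have lower': "(1 - y^2) * poly (pderiv (pderiv G)) y - 2 * y * poly (pderiv G) y =
      - (real m + 1) * (poly G y + y * poly (pderiv G) y)
      + (real m + 2 * real l) * poly (pderiv (gegenbauer l m)) y" for y
    by (simp add: poly_q q_def pderiv_pCons algebra_simps power2_eq_square)
  \<comment> \<open>The equation is obtained multiplied by \<open>1 - x\<^sup>2\<close>;
    the factor cancels in \<open>real poly\<close>.\<close>
  have "poly (q * E) y = 0" for y
    using lower'[of y] gegenbauer_deriv_lower[of y l m] gegenbauer_deriv_raise[of y l m]
    unfolding poly_mult poly_q poly_E G_def of_nat_Suc by algebra
  then have "q * E = 0" by (intro poly_ext) simp
  then have "E = 0" unfolding mult_eq_0_iff by (simp add: q_def)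
  then show ?thesis using poly_E[of x] by (simp add: Suc G_def)
qed simp

definition gegenbauer_weight :: "nat \<Rightarrow> real \<Rightarrow> real" where
  "gegenbauer_weight l x = (1 - x^2) powr (real l - 1/2)"

definition gegenbauer_op :: "nat \<Rightarrow> real poly \<Rightarrow> real \<Rightarrow> real" where
  "gegenbauer_op l f x = (1 - x^2) * poly (pderiv (pderiv f)) x - (2 * real l + 1) * x * poly (pderiv f) x"

lemma one_minus_square_pos: "\<bar>x\<bar> < 1 \<Longrightarrow> 0 < 1 - (x::real)^2"
  by (simp add: abs_square_less_1)

lemma continuous_on_one_minus_square_powr:
  "0 < r \<Longrightarrow> continuous_on {-1..1} (\<lambda>x::real. (1 - x^2) powr r)"
  by (rule continuous_on_powr') (auto intro!: continuous_intros simp: abs_square_le_1)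

lemma continuous_on_gegenbauer_weight: "l \<ge> 1 \<Longrightarrow> continuous_on {-1..1} (gegenbauer_weight l)"
  unfolding gegenbauer_weight_def[abs_def] by (rule continuous_on_one_minus_square_powr) simp

text \<open>Symmetry comes from the Sturm--Liouville form
  \<open>(w (1 - x\<^sup>2) f')' = w \<cdot> gegenbauer_op l f\<close>; the boundary terms vanish at \<open>\<plusminus>1\<close>.\<close>
lemma gegenbauer_op_symmetric:
  assumes "l \<ge> 1"
  shows "((\<lambda>x. gegenbauer_weight l x * (gegenbauer_op l f x * poly g x - poly f x * gegenbauer_op l g x))
           has_integral 0) {-1..1}"
proof -
  define H where "H x = (1 - x^2) powr (real l + 1/2) *
       (poly (pderiv f) x * poly g x - poly f x * poly (pderiv g) x)" for x
  have cont: "continuous_on {-1..1} H" unfolding H_def[abs_def]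
    by (intro continuous_intros continuous_on_one_minus_square_powr) simp
  have "(H has_real_derivative
      gegenbauer_weight l x * (gegenbauer_op l f x * poly g x - poly f x * gegenbauer_op l g x)) (at x)"
    if x: "x \<in> {-1<..<1}" for x
  proof -
    have pos: "0 < 1 - x^2" using x by (intro one_minus_square_pos) auto
    have w: "(1 - x^2) powr (real l + 1/2 - 1) = gegenbauer_weight l x"
      unfolding gegenbauer_weight_def by (simp add: algebra_simps)
    have w': "(1 - x^2) powr (real l + 1/2) = (1 - x^2) * gegenbauer_weight l x"
      using pos powr_add[of "1 - x^2" 1 "real l - 1/2"] by (simp add: gegenbauer_weight_def add.commute)
    have "((\<lambda>x. 1 - x^2) has_real_derivative (-2*x)) (at x)"
      by (auto intro!: derivative_eq_intros)
    from DERIV_fun_powr[OF this pos, of "real l + 1/2"]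
    have "(H has_real_derivative
       (real l + 1/2) * (1 - x^2) powr (real l + 1/2 - 1) * (-2*x) *
         (poly (pderiv f) x * poly g x - poly f x * poly (pderiv g) x)
       + ((poly (pderiv (pderiv f)) x * poly g x + poly (pderiv g) x * poly (pderiv f) x)
       - (poly (pderiv f) x * poly (pderiv g) x + poly (pderiv (pderiv g)) x * poly f x))
         * (1 - x^2) powr (real l + 1/2)) (at x)"
      unfolding H_def[abs_def] by (intro DERIV_mult DERIV_diff poly_DERIV) simp_all
    then show ?thesis unfolding w w' by (simp add: gegenbauer_op_def algebra_simps)
  qed
  then have "((\<lambda>x. gegenbauer_weight l x * (gegenbauer_op l f x * poly g x - poly f x * gegenbauer_op l g x))
      has_integral (H 1 - H (-1))) {-1..1}"
    by (intro fundamental_theorem_of_calculus_interior cont)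
      (auto simp: has_real_derivative_iff_has_vector_derivative)
  moreover have "H 1 = 0" "H (-1) = 0" unfolding H_def by simp_all
  ultimately show ?thesis by simp
qed

lemma gegenbauer_op_gegenbauer:
  "gegenbauer_op l (gegenbauer l k) x = - (real k * (real k + 2 * real l)) * poly (gegenbauer l k) x"
  using gegenbauer_ode[of x l k] unfolding gegenbauer_op_def by (simp add: algebra_simps)

lemma gegenbauer_op_monom:
  "gegenbauer_op l (monom 1 m) x =
     real m * (real m - 1) * x ^ (m - 2) - real m * (real m + 2 * real l) * x ^ m"
proof (cases m)
  case (Suc m')
  then show ?thesis
    by (cases m') (simp_all add: gegenbauer_op_def pderiv_monom poly_monom algebra_simps power2_eq_square)
qed (simp add: gegenbauer_op_def pderiv_monom)

definition gegenbauer_moment :: "nat \<Rightarrow> nat \<Rightarrow> nat \<Rightarrow> real" where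
  "gegenbauer_moment l k m = integral {-1..1} (\<lambda>x. gegenbauer_weight l x * (poly (gegenbauer l k) x * x ^ m))"

lemma integrable_gegenbauer_weight:
  "l \<ge> 1 \<Longrightarrow> (\<lambda>x. gegenbauer_weight l x * (poly p x * x ^ m)) integrable_on {-1..1}"
  by (intro integrable_continuous_interval continuous_intros continuous_on_gegenbauer_weight)

lemma gegenbauer_moment_rec:
  assumes "l \<ge> 1"
  shows "(real m * (real m + 2 * real l) - real k * (real k + 2 * real l)) * gegenbauer_moment l k m
          = real m * (real m - 1) * gegenbauer_moment l k (m - 2)"
proof -
  define c1 where "c1 = real m * (real m + 2 * real l) - real k * (real k + 2 * real l)"
  define c2 where "c2 = real m * (real m - 1)"
  let ?f = "\<lambda>j x. gegenbauer_weight l x * (poly (gegenbauer l k) x * x ^ j)"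
  have "((\<lambda>x. c1 * ?f m x - c2 * ?f (m - 2) x) has_integral
      (c1 * gegenbauer_moment l k m - c2 * gegenbauer_moment l k (m - 2))) {-1..1}"
    unfolding gegenbauer_moment_def
    by (intro has_integral_diff has_integral_mult_right integrable_integral
        integrable_gegenbauer_weight assms)
  moreover have "((\<lambda>x. c1 * ?f m x - c2 * ?f (m - 2) x) has_integral 0) {-1..1}"
    using gegenbauer_op_symmetric[OF assms, of "gegenbauer l k" "monom 1 m"]
    by (simp add: gegenbauer_op_gegenbauer gegenbauer_op_monom c1_def c2_def poly_monom algebra_simps)
  ultimately have "c1 * gegenbauer_moment l k m - c2 * gegenbauer_moment l k (m - 2) = 0"
    by (rule has_integral_unique)
  then show ?thesis unfolding c1_def c2_def by simp
qed

lemma gegenbauer_moment_eq_0: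
  assumes "l \<ge> 1" "m < k"
  shows "gegenbauer_moment l k m = 0"
  using assms(2)
proof (induction m rule: less_induct)
  case (less m)
  have "real m * (real m - 1) * gegenbauer_moment l k (m - 2) = 0"
    using less.IH[of "m - 2"] less.prems by (cases "m \<ge> 2") auto
  then have "(real m * (real m + 2 * real l) - real k * (real k + 2 * real l))
      * gegenbauer_moment l k m = 0"
    by (subst gegenbauer_moment_rec[OF assms(1)])
  moreover have "real m * (real m + 2 * real l) < real k * (real k + 2 * real l)"
    using less.prems by (intro mult_strict_mono) auto
  ultimately show ?case by simp
qed

lemma poly_eq_0_if_weighted_square_integral_0:
  fixes d :: "real poly"
  assumes w_cont: "continuous_on {-1..1} w" and w_pos: "\<And>x. \<bar>x\<bar> < 1 \<Longrightarrow> 0 < w x"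
    and int: "((\<lambda>x. poly d x * poly d x * w x) has_integral 0) {-1..1}"
  shows "d = 0"
proof -
  have zero: "poly d x * poly d x * w x = 0" if "x \<in> {-1..1}" for x
  proof (rule has_integral_0_cbox_imp_0[of "-1" 1 "\<lambda>x. poly d x * poly d x * w x"])
    show "continuous_on (cbox (- 1) 1) (\<lambda>x. poly d x * poly d x * w x)"
      using w_cont by (simp add: cbox_interval) (intro continuous_intros)
    show "0 \<le> poly d x * poly d x * w x" if "x \<in> box (- 1) 1" for x
      using w_pos[of x] that by (simp add: box_real abs_less_iff)
  qed (use int that in \<open>simp_all add: cbox_interval box_real\<close>)
  then have "{-1<..<1::real} \<subseteq> {x. poly d x = 0}"
  proof (intro subsetI CollectI)
    fix x :: real assume "x \<in> {-1<..<1}"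
    then have "0 < w x" "poly d x * poly d x * w x = 0"
      using w_pos[of x] zero[of x] by (auto simp: abs_less_iff)
    then show "poly d x = 0" by simp
  qed
  moreover have "infinite {-1<..<1::real}" by (rule infinite_Ioo) simp
  ultimately have "infinite {x. poly d x = 0}" using finite_subset by blast
  then show ?thesis using poly_roots_finite by blast
qed

lemma ultra_cond_gegenbauer:
  assumes "l \<ge> 1"
  shows "ultra_cond l k (gegenbauer l k)"
  unfolding ultra_cond_def
proof (intro conjI allI impI)
  show "degree (gegenbauer l k) = k" "coeff (gegenbauer l k) k = 2 ^ k * pochhammer (real l) k / fact k"
    using gegenbauer_degree_coeff[OF assms] by simp_all
  fix q :: "real poly" assume q: "degree q < k"
  have "((\<lambda>x. \<Sum>i\<le>degree q. coeff q i * (gegenbauer_weight l x * (poly (gegenbauer l k) x * x ^ i)))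
      has_integral (\<Sum>i\<le>degree q. coeff q i * gegenbauer_moment l k i)) {-1..1}"
    unfolding gegenbauer_moment_def
    by (intro has_integral_sum has_integral_mult_right integrable_integral
        integrable_gegenbauer_weight assms) auto
  moreover have "(\<Sum>i\<le>degree q. coeff q i * gegenbauer_moment l k i) = 0"
    using q by (intro sum.neutral) (auto simp: gegenbauer_moment_eq_0[OF assms])
  moreover have "(\<lambda>x. \<Sum>i\<le>degree q. coeff q i * (gegenbauer_weight l x * (poly (gegenbauer l k) x * x ^ i)))
      = (\<lambda>x. poly (gegenbauer l k) x * poly q x * (1 - x^2) powr (real l - 1/2))"
    by (subst poly_altdef[of q])
      (simp add: sum_distrib_left sum_distrib_right gegenbauer_weight_def mult_ac)
  ultimately show "integral {-1..1}
      (\<lambda>x. poly (gegenbauer l k) x * poly q x * (1 - x^2) powr (real l - 1/2)) = 0"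
    by (metis integral_unique)
qed

lemma ultra_cond_unique:
  assumes l: "l \<ge> 1" and p: "ultra_cond l k p" and p': "ultra_cond l k p'"
  shows "p = p'"
proof -
  define d where "d = p - p'"
  define w where "w x = (1 - x^2) powr (real l - 1/2)" for x :: real
  have w_cont: "continuous_on {-1..1} w"
    unfolding w_def[abs_def] by (rule continuous_on_one_minus_square_powr) (use l in simp)
  have "degree d \<le> k" "coeff d k = 0"
    using p p' unfolding d_def ultra_cond_def by (auto simp: degree_diff_le)
  then have "degree d < k \<or> d = 0"
    by (metis le_neq_implies_less leading_coeff_0_iff)
  then have "((\<lambda>x. poly r x * poly d x * w x) has_integral 0) {-1..1}"
    if r: "ultra_cond l k r" for r
  proof
    assume "degree d < k"
    then have "integral {-1..1} (\<lambda>x. poly r x * poly d x * w x) = 0"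
      using r unfolding ultra_cond_def w_def by blast
    moreover have "(\<lambda>x. poly r x * poly d x * w x) integrable_on {-1..1}"
      by (intro integrable_continuous_interval continuous_intros w_cont)
    ultimately show ?thesis by (metis has_integral_integrable_integral)
  qed simp
  from has_integral_diff[OF this[OF p] this[OF p']]
  have "((\<lambda>x. poly d x * poly d x * w x) has_integral 0) {-1..1}"
    by (simp add: d_def algebra_simps)
  moreover have "0 < w x" if "\<bar>x\<bar> < 1" for x
    using one_minus_square_pos[OF that] by (simp add: w_def)
  ultimately have "d = 0"
    using poly_eq_0_if_weighted_square_integral_0[OF w_cont] by blast
  then show ?thesis by (simp add: d_def)
qed

lemma ultra_eq: "ultra l k = (if l = 0 then cheb_poly k else gegenbauer l k)"
proof (cases "l = 0")
  case False
  then have "l \<ge> 1" by simp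
  then have "(THE p. ultra_cond l k p) = gegenbauer l k"
    using ultra_cond_gegenbauer ultra_cond_unique by blast
  with False show ?thesis by (simp add: ultra_def)
qed (simp add: ultra_def cheb_eq_cheb_poly)

definition ultra_up :: "nat \<Rightarrow> nat \<Rightarrow> real" where
  "ultra_up l k = (if l = 0 then (if k = 0 then 1 else 1/2)
                   else if k = 0 then 1 / (2 * real l) else (real k + 1) / (2 * (real k + real l)))"

definition ultra_down :: "nat \<Rightarrow> nat \<Rightarrow> real" where
  "ultra_down l k = (if k = 0 then 0 else if l = 0 then 1/2
                     else (real k + 2 * real l - 1) / (2 * (real k + real l)))"

lemma abs_ultra_up_le_1: "\<bar>ultra_up l k\<bar> \<le> 1"
  by (auto simp: ultra_up_def)

lemma abs_ultra_down_le_1: "\<bar>ultra_down l k\<bar> \<le> 1"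
  by (auto simp: ultra_down_def)

lemma ultra_down_0 [simp]: "ultra_down l 0 = 0"
  by (simp add: ultra_down_def)

lemma pCons_0_gegenbauer:
  assumes "l \<ge> 1"
  shows "pCons 0 (gegenbauer l k) =
    smult (ultra_up l k) (gegenbauer l (Suc k)) + smult (ultra_down l k) (gegenbauer l (k - 1))"
proof (cases k)
  case (Suc n)
  define c where "c = 2 * (real n + 1 + real l)"
  have c: "c > 0" by (simp add: c_def)
  have up: "ultra_up l (Suc n) = (real n + 2) / c"
    and down: "ultra_down l (Suc n) = (real n + 2 * real l) / c"
    using assms by (simp_all add: Suc ultra_up_def ultra_down_def c_def algebra_simps)
  have "poly (smult (ultra_up l k) (gegenbauer l (Suc k))
      + smult (ultra_down l k) (gegenbauer l (k - 1))) x = poly (pCons 0 (gegenbauer l k)) x" for x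
  proof -
    have "c * (x * poly (gegenbauer l (Suc n)) x) = (real n + 2) * poly (gegenbauer l (Suc (Suc n))) x
        + (real n + 2 * real l) * poly (gegenbauer l n) x"
      using poly_gegenbauer_rec[of n l x] by (simp add: c_def)
    then show ?thesis using c
      by (simp add: Suc up down add_divide_distrib[symmetric] field_simps del: gegenbauer.simps)
  qed
  then show ?thesis by (intro poly_ext) simp
qed (use assms in \<open>simp add: ultra_up_def\<close>)

lemma degree_ultra: "degree (ultra l k) = k"
  and lead_coeff_ultra_nonzero: "coeff (ultra l k) k \<noteq> 0"
  using cheb_poly_degree_coeff[of k] gegenbauer_degree_coeff[of l k]
    pochhammer_pos[of "real l" k] by (auto simp: ultra_eq)

lemma pCons_0_ultra:
  "pCons 0 (ultra l k) = smult (ultra_up l k) (ultra l (Suc k)) + smult (ultra_down l k) (ultra l (k - 1))"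
  using pCons_0_cheb_poly[of k] pCons_0_gegenbauer[of l k]
  by (cases "l = 0") (auto simp: ultra_eq ultra_up_def ultra_down_def)

lemma degree_ultraC: "degree (ultraC l k) = k"
  and ultraC_nonzero: "ultraC l k \<noteq> 0"
  using degree_ultra[of l k] lead_coeff_ultra_nonzero[of l k]
  by (auto simp: ultraC_def degree_map_poly map_poly_eq_0_iff)

lemma pCons_0_ultraC:
  "pCons 0 (ultraC l k) = smult (of_real (ultra_up l k)) (ultraC l (Suc k))
     + smult (of_real (ultra_down l k)) (ultraC l (k - 1))"
proof (rule poly_eqI)
  fix n
  have "coeff (pCons 0 (ultra l k)) n =
      ultra_up l k * coeff (ultra l (Suc k)) n + ultra_down l k * coeff (ultra l (k - 1)) n"
    by (subst pCons_0_ultra) simp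
  then show "coeff (pCons 0 (ultraC l k)) n = coeff (smult (of_real (ultra_up l k)) (ultraC l (Suc k))
      + smult (of_real (ultra_down l k)) (ultraC l (k - 1))) n"
    by (cases n) (simp_all add: ultraC_def coeff_map_poly flip: of_real_mult of_real_add)
qed

locale graded_basis =
  fixes P :: "nat \<Rightarrow> 'a::field poly"
  assumes degree_basis: "degree (P i) = i"
    and basis_nonzero: "P i \<noteq> 0"
begin

abbreviation comb :: "(nat \<Rightarrow> 'a) \<Rightarrow> nat \<Rightarrow> 'a poly" where
  "comb c n \<equiv> (\<Sum>i<n. smult (c i) (P i))"

definition basis_coeff :: "'a poly \<Rightarrow> nat \<Rightarrow> 'a" where
  "basis_coeff p = (THE c. (\<forall>i > degree p. c i = 0) \<and> p = (\<Sum>i\<le>degree p. smult (c i) (P i)))"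

lemma lead_coeff_basis_nonzero: "coeff (P i) i \<noteq> 0"
  using basis_nonzero[of i] degree_basis[of i] by (metis leading_coeff_0_iff)

lemma degree_comb_less: "degree (comb c n) < n \<or> comb c n = 0"
proof (induction n)
  case (Suc n)
  have "degree (comb c n) \<le> n" using Suc by (cases "comb c n = 0") auto
  moreover have "degree (smult (c n) (P n)) \<le> n"
    using degree_basis[of n] by (metis degree_smult_le)
  ultimately have "degree (comb c (Suc n)) \<le> n" by (simp add: degree_add_le)
  then show ?case by simp
qed simp

lemma smult_comb: "smult a (comb c n) = comb (\<lambda>i. a * c i) n"
  by (induction n) (simp_all add: smult_add_right)

lemma comb_eq_0_imp: "comb c n = 0 \<Longrightarrow> i < n \<Longrightarrow> c i = 0"
proof (induction n arbitrary: i)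
  case (Suc n)
  have "coeff (comb c n) n = 0" using degree_comb_less[of c n] by (auto simp: coeff_eq_0)
  then have "c n * coeff (P n) n = 0" using Suc.prems(1) by (metis coeff_add coeff_smult
        sum.lessThan_Suc add_0 coeff_0)
  then have "c n = 0" using lead_coeff_basis_nonzero[of n] by simp
  then show ?case using Suc by (cases "i = n") auto
qed simp

lemma comb_unique: "comb c n = comb c' n \<Longrightarrow> i < n \<Longrightarrow> c i = c' i"
  using comb_eq_0_imp[of "\<lambda>i. c i - c' i" n i] by (simp add: smult_diff_left sum_subtractf)

lemma comb_extend: "(\<And>i. n \<le> i \<Longrightarrow> i < m \<Longrightarrow> c i = 0) \<Longrightarrow> n \<le> m \<Longrightarrow> comb c m = comb c n"
  by (rule sum.mono_neutral_right) auto

lemma exists_comb: "\<exists>c. p = comb c (Suc (degree p))"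
proof (induction "degree p" arbitrary: p rule: less_induct)
  case less
  define d where "d = degree p"
  define a where "a = coeff p d / coeff (P d) d"
  define q where "q = p - smult a (P d)"
  have "coeff q d = 0" using lead_coeff_basis_nonzero[of d] by (simp add: q_def a_def)
  moreover have "degree q \<le> d"
    unfolding q_def d_def using degree_basis by (metis degree_diff_le degree_smult_le order_refl)
  ultimately have "degree q < d \<or> q = 0"
    by (metis le_neq_implies_less leading_coeff_0_iff)
  then obtain c where c: "q = comb c d"
  proof
    assume "degree q < d"
    then obtain c where "q = comb c (Suc (degree q))" using less d_def by blast
    moreover have "comb (\<lambda>i. if i \<le> degree q then c i else 0) d = comb c (Suc (degree q))"
      using \<open>degree q < d\<close> by (subst comb_extend[of "Suc (degree q)"]) auto
    ultimately show ?thesis using that by metis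
  qed (use that[of "\<lambda>_. 0"] in simp)
  have "comb (c(d := a)) (Suc d) = comb c d + smult a (P d)"
    by simp
  also have "\<dots> = p" using c by (simp add: q_def algebra_simps)
  finally show ?case unfolding d_def by metis
qed

lemma comb_eq_0_above:
  assumes "p = comb c n" "degree p < i" "i < n"
  shows "c i = 0"
proof -
  obtain c' where c': "p = comb c' (Suc (degree p))" using exists_comb by blast
  have "comb (\<lambda>i. if i \<le> degree p then c' i else 0) n = comb c' (Suc (degree p))"
    using assms by (subst comb_extend[of "Suc (degree p)"]) auto
  then have "comb c n = comb (\<lambda>i. if i \<le> degree p then c' i else 0) n"
    using assms(1) c' by simp
  from comb_unique[OF this \<open>i < n\<close>] show ?thesis using assms(2) by simp
qed

lemma basis_coeff_comb:
  assumes p: "p = comb c n"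
  shows "basis_coeff p j = (if j < n then c j else 0)"
proof -
  define c0 where "c0 i = (if i < n then c i else 0)" for i
  have c0: "comb c0 m = p" if "n \<le> m" for m
    using that by (subst comb_extend[of n]) (auto simp: c0_def p)
  have c0_above: "\<forall>i>degree p. c0 i = 0" using comb_eq_0_above[OF p] by (auto simp: c0_def)
  have "basis_coeff p = c0"
    unfolding basis_coeff_def
  proof (rule the_equality)
    have "(\<Sum>i\<le>degree p. smult (c0 i) (P i)) = comb c0 (max n (Suc (degree p)))"
      using c0_above by (subst comb_extend[of "Suc (degree p)"]) (auto simp: lessThan_Suc_atMost)
    then show "(\<forall>i>degree p. c0 i = 0) \<and> p = (\<Sum>i\<le>degree p. smult (c0 i) (P i))"
      using c0_above c0 by simp
  next
    fix c1 assume c1: "(\<forall>i>degree p. c1 i = 0) \<and> p = (\<Sum>i\<le>degree p. smult (c1 i) (P i))"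
    define M where "M = max n (Suc (degree p))"
    have "comb c1 M = p"
      using c1 by (subst comb_extend[of "Suc (degree p)"]) (auto simp: M_def lessThan_Suc_atMost)
    then have "c1 i = c0 i" if "i < M" for i
      using comb_unique[of c1 M c0] c0[of M] that by (simp add: M_def)
    moreover have "c1 i = c0 i" if "i \<ge> M" for i
      using c1 that by (auto simp: c0_def M_def)
    ultimately show "c1 = c0" by (meson ext not_le)
  qed
  then show ?thesis by (simp add: c0_def)
qed

lemma basis_coeff_eq_0:
  assumes "degree p < j"
  shows "basis_coeff p j = 0"
proof -
  obtain c where "p = comb c (Suc (degree p))" using exists_comb by blast
  from basis_coeff_comb[OF this, of j] show ?thesis using assms by simp
qed

lemma comb_basis_coeff:
  assumes "degree p < n"
  shows "comb (basis_coeff p) n = p"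
proof -
  obtain c where c: "p = comb c (Suc (degree p))" using exists_comb by blast
  have "comb (basis_coeff p) n = comb (basis_coeff p) (Suc (degree p))"
    using assms basis_coeff_eq_0 by (intro comb_extend) auto
  also have "\<dots> = comb c (Suc (degree p))"
    by (intro sum.cong) (simp_all add: basis_coeff_comb[OF c])
  finally show ?thesis using c by simp
qed

lemma basis_coeff_add: "basis_coeff (p + q) j = basis_coeff p j + basis_coeff q j"
proof -
  define n where "n = Suc (max (degree p) (degree q))"
  have "p + q = comb (\<lambda>i. basis_coeff p i + basis_coeff q i) n"
    using comb_basis_coeff[of p n] comb_basis_coeff[of q n]
    by (simp add: n_def smult_add_left sum.distrib)
  from basis_coeff_comb[OF this] show ?thesis
    using basis_coeff_eq_0[of p j] basis_coeff_eq_0[of q j] by (auto simp: n_def)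
qed

lemma basis_coeff_smult: "basis_coeff (smult a p) j = a * basis_coeff p j"
proof -
  have "smult a p = smult a (comb (basis_coeff p) (Suc (degree p)))"
    using comb_basis_coeff[of p "Suc (degree p)"] by simp
  also have "\<dots> = comb (\<lambda>i. a * basis_coeff p i) (Suc (degree p))"
    by (rule smult_comb)
  finally have "smult a p = comb (\<lambda>i. a * basis_coeff p i) (Suc (degree p))" .
  from basis_coeff_comb[OF this] show ?thesis using basis_coeff_eq_0[of p j] by auto
qed

lemma basis_coeff_0 [simp]: "basis_coeff 0 j = 0"
  using basis_coeff_smult[of 0 0 j] by simp

lemma basis_coeff_basis: "basis_coeff (P k) j = (if j = k then 1 else 0)"
proof -
  have "P k = comb (\<lambda>i. if i = k then 1 else 0) (Suc k)"
    by (simp add: if_distrib[of "\<lambda>c. smult c _"] cong: if_cong)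
  from basis_coeff_comb[OF this] show ?thesis by auto
qed

lemma basis_coeff_sum: "finite S \<Longrightarrow> basis_coeff (\<Sum>i\<in>S. f i) j = (\<Sum>i\<in>S. basis_coeff (f i) j)"
  by (induction S rule: finite_induct) (simp_all add: basis_coeff_add)

end

interpretation ultraC_basis: graded_basis "ultraC l" for l
  by unfold_locales (simp_all add: degree_ultraC ultraC_nonzero)

lemma gcoef_eq_basis_coeff: "gcoef l = ultraC_basis.basis_coeff l"
  by (rule ext) (simp add: gcoef_def ultraC_basis.basis_coeff_def)

lemma gcoef_add: "gcoef l (p + q) j = gcoef l p j + gcoef l q j"
  and gcoef_smult: "gcoef l (smult c p) j = c * gcoef l p j"
  and gcoef_ultraC: "gcoef l (ultraC l k) j = (if j = k then 1 else 0)"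
  and gcoef_0 [simp]: "gcoef l 0 j = 0"
  by (simp_all add: gcoef_eq_basis_coeff ultraC_basis.basis_coeff_add
      ultraC_basis.basis_coeff_smult ultraC_basis.basis_coeff_basis)

lemma gcoef_sum: "finite S \<Longrightarrow> gcoef l (\<Sum>i\<in>S. f i) j = (\<Sum>i\<in>S. gcoef l (f i) j)"
  by (simp add: gcoef_eq_basis_coeff ultraC_basis.basis_coeff_sum)

definition xmul_op :: "nat \<Rightarrow> cseq \<Rightarrow> cseq" where
  "xmul_op l u j = (if j = 0 then 0 else of_real (ultra_up l (j - 1)) * u (j - 1))
                   + of_real (ultra_down l (Suc j)) * u (Suc j)"

lemma gcoef_pCons_0: "gcoef l (pCons 0 p) = xmul_op l (gcoef l p)"
proof
  fix j
  define n where "n = Suc (degree p)"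
  define g where "g = gcoef l p"
  have g_above: "g i = 0" if "n \<le> i" for i
    using that ultraC_basis.basis_coeff_eq_0 by (simp add: g_def n_def gcoef_eq_basis_coeff)
  have "pCons 0 p = [:0, 1:] * ultraC_basis.comb l g n"
    using ultraC_basis.comb_basis_coeff[of p n l] by (simp add: g_def n_def gcoef_eq_basis_coeff)
  also have "\<dots> = (\<Sum>i<n. smult (g i * of_real (ultra_up l i)) (ultraC l (Suc i))
      + smult (g i * of_real (ultra_down l i)) (ultraC l (i - 1)))"
    by (simp add: sum_distrib_left mult_smult_right pCons_0_ultraC smult_add_right)
  finally have "gcoef l (pCons 0 p) j = (\<Sum>i<n. (if j = Suc i then g i * of_real (ultra_up l i) else 0)
      + (if j = i - 1 then g i * of_real (ultra_down l i) else 0))"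
    by (simp add: gcoef_sum gcoef_add gcoef_smult gcoef_ultraC if_distrib[of "\<lambda>x. _ * x"]
        cong: if_cong)
  also have "\<dots> = (\<Sum>i<n. (if j = Suc i then g i * of_real (ultra_up l i) else 0))
      + (\<Sum>i<n. (if i = Suc j then g i * of_real (ultra_down l i) else 0))"
    by (subst sum.distrib[symmetric], rule sum.cong) (auto simp: ultra_down_def)
  also have "\<dots> = xmul_op l g j"
    using g_above[of "j - 1"] g_above[of "Suc j"]
    by (cases j) (auto simp: xmul_op_def sum.delta' mult.commute)
  finally show "gcoef l (pCons 0 p) j = xmul_op l (gcoef l p) j" by (simp add: g_def)
qed

lemma gcoef_pCons_mult_ultraC:
  "gcoef l (pCons c a * ultraC l k) j =
     (if j = k then c else 0) + xmul_op l (gcoef l (a * ultraC l k)) j"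
proof -
  have "pCons c a * ultraC l k = smult c (ultraC l k) + pCons 0 (a * ultraC l k)" by simp
  then show ?thesis by (simp only: gcoef_add gcoef_smult gcoef_ultraC gcoef_pCons_0) simp
qed

lemma gcoef_mult_ultraC_banded: "\<exists>b. \<forall>k j. j + b < k \<longrightarrow> gcoef l (a * ultraC l k) j = 0"
proof (induction a rule: pCons_induct)
  case 0
  then show ?case by simp
next
  case (pCons c a)
  then obtain b where b: "\<And>k j. j + b < k \<Longrightarrow> gcoef l (a * ultraC l k) j = 0" by blast
  have "gcoef l (pCons c a * ultraC l k) j = 0" if "j + Suc b < k" for k j
    using that b[of "j - 1" k] b[of "Suc j" k] unfolding gcoef_pCons_mult_ultraC
    by (simp add: xmul_op_def)
  then show ?case by blast
qed

lemma Mop_eq_sum: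
  assumes "\<forall>k j. j + b < k \<longrightarrow> gcoef l (a * ultraC l k) j = 0" and "j + b < n"
  shows "Mop l a v j = (\<Sum>k<n. gcoef l (a * ultraC l k) j * v k)"
  unfolding Mop_def by (rule suminf_finite) (use assms in auto)

lemma Mop_0: "Mop l 0 v = (\<lambda>j. 0)"
  by (rule ext) (simp add: Mop_def)

lemma Mop_pCons: "Mop l (pCons c a) v = (\<lambda>j. c * v j + xmul_op l (Mop l a v) j)"
proof
  fix j
  obtain b where b: "\<forall>k j. j + b < k \<longrightarrow> gcoef l (a * ultraC l k) j = 0"
    using gcoef_mult_ultraC_banded by blast
  obtain b' where b': "\<forall>k j. j + b' < k \<longrightarrow> gcoef l (pCons c a * ultraC l k) j = 0"
    using gcoef_mult_ultraC_banded by blast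
  define n where "n = j + b + b' + 2"
  let ?g = "\<lambda>i k. gcoef l (a * ultraC l k) i * v k"
  have "Mop l (pCons c a) v j = (\<Sum>k<n. gcoef l (pCons c a * ultraC l k) j * v k)"
    by (rule Mop_eq_sum[OF b']) (simp add: n_def)
  also have "\<dots> = (\<Sum>k<n. if j = k then c * v k else 0)
      + ((if j = 0 then 0 else of_real (ultra_up l (j - 1)) * (\<Sum>k<n. ?g (j - 1) k))
      + of_real (ultra_down l (Suc j)) * (\<Sum>k<n. ?g (Suc j) k))"
    unfolding gcoef_pCons_mult_ultraC xmul_op_def
    by (simp add: sum.distrib sum_distrib_left algebra_simps if_distrib[of "\<lambda>x. _ * x"] cong: if_cong)
  also have "\<dots> = c * v j + xmul_op l (Mop l a v) j"
    using Mop_eq_sum[OF b, of "j - 1" n v] Mop_eq_sum[OF b, of "Suc j" n v]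
    by (simp add: xmul_op_def n_def)
  finally show "Mop l (pCons c a) v j = c * v j + xmul_op l (Mop l a v) j" .
qed

section \<open>Weighted sequence spaces and banded operators\<close>

definition l2_weight :: "real \<Rightarrow> nat \<Rightarrow> real" where
  "l2_weight mu k = (real k + 1) powr (2 * mu)"

definition l2_term :: "real \<Rightarrow> cseq \<Rightarrow> nat \<Rightarrow> real" where
  "l2_term mu v k = (cmod (v k))^2 * l2_weight mu k"

lemma l2_weight_pos: "0 < l2_weight mu k"
  by (simp add: l2_weight_def)

lemma l2_term_nonneg: "0 \<le> l2_term mu v k"
  by (simp add: l2_term_def l2_weight_def)

lemma in_l2_iff_summable: "in_l2 mu u \<longleftrightarrow> summable (l2_term mu u)"
  by (simp add: in_l2_def l2_term_def[abs_def] l2_weight_def)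

lemma l2norm_eq: "l2norm mu u = sqrt (\<Sum>k. l2_term mu u k)"
  by (simp add: l2norm_def l2_term_def[abs_def] l2_weight_def)

lemma l2_term_add_le: "l2_term mu (\<lambda>k. a k + b k) j \<le> 2 * l2_term mu a j + 2 * l2_term mu b j"
proof -
  have "(cmod (a j + b j))^2 \<le> (cmod (a j) + cmod (b j))^2"
    by (intro power_mono norm_triangle_ineq) simp
  also have "\<dots> \<le> 2 * (cmod (a j))^2 + 2 * (cmod (b j))^2"
    using sum_squares_bound[of "cmod (a j)" "cmod (b j)"] by (simp add: power2_eq_square algebra_simps)
  finally have "(cmod (a j + b j))^2 * l2_weight mu j \<le>
      (2 * (cmod (a j))^2 + 2 * (cmod (b j))^2) * l2_weight mu j"
    using l2_weight_pos[of mu j] by (intro mult_right_mono) simp_all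
  then show ?thesis by (simp add: l2_term_def algebra_simps)
qed

lemma in_l2_add:
  assumes "in_l2 mu a" "in_l2 mu b"
  shows "in_l2 mu (\<lambda>k. a k + b k)"
    and "(\<Sum>k. l2_term mu (\<lambda>k. a k + b k) k) \<le> 2 * (\<Sum>k. l2_term mu a k) + 2 * (\<Sum>k. l2_term mu b k)"
proof -
  have sa: "summable (l2_term mu a)" and sb: "summable (l2_term mu b)"
    using assms by (auto simp: in_l2_iff_summable)
  then have s2: "summable (\<lambda>j. 2 * l2_term mu a j + 2 * l2_term mu b j)"
    by (intro summable_add summable_mult)
  have s: "summable (l2_term mu (\<lambda>k. a k + b k))"
    by (rule summable_comparison_test'[OF s2, of 0]) (use l2_term_add_le l2_term_nonneg in auto)
  then show "in_l2 mu (\<lambda>k. a k + b k)" by (simp add: in_l2_iff_summable)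
  have "(\<Sum>k. l2_term mu (\<lambda>k. a k + b k) k) \<le> (\<Sum>j. 2 * l2_term mu a j + 2 * l2_term mu b j)"
    by (rule suminf_le[OF l2_term_add_le s s2])
  also have "\<dots> = 2 * (\<Sum>k. l2_term mu a k) + 2 * (\<Sum>k. l2_term mu b k)"
    using sa sb by (simp add: suminf_add[symmetric] suminf_mult summable_mult)
  finally show "(\<Sum>k. l2_term mu (\<lambda>k. a k + b k) k) \<le> 2 * (\<Sum>k. l2_term mu a k) + 2 * (\<Sum>k. l2_term mu b k)" .
qed

lemma in_l2_finite_support:
  assumes "\<And>j. N \<le> j \<Longrightarrow> a j = 0"
  shows "in_l2 mu a" and "(\<Sum>k. l2_term mu a k) = (\<Sum>j<N. l2_term mu a j)"
proof -
  have zero: "l2_term mu a j = 0" if "j \<notin> {..<N}" for j using assms that by (auto simp: l2_term_def)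
  show "in_l2 mu a" unfolding in_l2_iff_summable by (rule summable_finite[of "{..<N}"]) (use zero in auto)
  show "(\<Sum>k. l2_term mu a k) = (\<Sum>j<N. l2_term mu a j)" by (rule suminf_finite) (use zero in auto)
qed

lemma l2_term_le_suminf: "in_l2 mu a \<Longrightarrow> l2_term mu a k \<le> (\<Sum>k. l2_term mu a k)"
  using sum_le_suminf[of "l2_term mu a" "{k}"] by (simp add: in_l2_iff_summable l2_term_nonneg)

lemma norm_le_l2norm:
  assumes "in_l2 mu u"
  shows "cmod (u k) \<le> (real k + 1) powr (- mu) * l2norm mu u"
proof -
  have "(cmod (u k))^2 \<le> (\<Sum>k. l2_term mu u k) / l2_weight mu k"
    using l2_term_le_suminf[OF assms, of k] l2_weight_pos[of mu k]
    by (simp add: l2_term_def pos_le_divide_eq)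
  then have "cmod (u k) \<le> sqrt ((\<Sum>k. l2_term mu u k) / l2_weight mu k)"
    by (rule real_le_rsqrt)
  also have "\<dots> = (real k + 1) powr (- mu) * l2norm mu u"
    by (simp add: l2norm_eq l2_weight_def real_sqrt_divide powr_minus_divide powr_half_sqrt[symmetric]
        powr_powr)
  finally show ?thesis .
qed

definition window_sum :: "(nat \<Rightarrow> real) \<Rightarrow> nat \<Rightarrow> nat \<Rightarrow> real" where
  "window_sum F m j = (\<Sum>i<m. F (j + i) + (if i \<le> j then F (j - i) else 0))"

lemma window_sum_nonneg: "(\<And>k. 0 \<le> F k) \<Longrightarrow> 0 \<le> window_sum F m j"
  unfolding window_sum_def by (intro sum_nonneg) auto

lemma window_sum_mono: "(\<And>k. 0 \<le> F k) \<Longrightarrow> m \<le> m' \<Longrightarrow> window_sum F m j \<le> window_sum F m' j"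
  unfolding window_sum_def by (rule sum_mono2) auto

lemma le_window_sum:
  assumes F: "\<And>k. 0 \<le> F k" and k: "k < j + m" "j < k + m"
  shows "F k \<le> window_sum F m j"
proof -
  define i where "i = (if j \<le> k then k - j else j - k)"
  have "i \<in> {..<m}" using k by (auto simp: i_def)
  then have "F (j + i) + (if i \<le> j then F (j - i) else 0) \<le> window_sum F m j"
    unfolding window_sum_def by (rule member_le_sum) (use F in auto)
  moreover have "F k \<le> F (j + i) + (if i \<le> j then F (j - i) else 0)"
    using F by (auto simp: i_def)
  ultimately show ?thesis by simp
qed

lemma window_sum_le:
  assumes F: "\<And>k. 0 \<le> F k" and X: "\<And>k. k < j + m \<Longrightarrow> j < k + m \<Longrightarrow> F k \<le> X"
  shows "window_sum F m j \<le> 2 * real m * X"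
proof (cases "m = 0")
  case False
  then have "0 \<le> X" using X[of j] F[of j] by simp
  then have "window_sum F m j \<le> of_nat (card {..<m}) * (2 * X)"
  proof (unfold window_sum_def, intro sum_bounded_above)
    fix i assume "i \<in> {..<m}"
    then have "F (j + i) \<le> X" "i \<le> j \<Longrightarrow> F (j - i) \<le> X" by (auto intro!: X)
    then show "F (j + i) + (if i \<le> j then F (j - i) else 0) \<le> 2 * X" using \<open>0 \<le> X\<close> by auto
  qed
  then show ?thesis by simp
qed (simp add: window_sum_def)

lemma window_sum_window_sum:
  assumes F: "\<And>k. 0 \<le> F k" and G0: "\<And>k. 0 \<le> G k" and c: "0 \<le> c"
    and G: "\<And>k. k < j + m1 \<Longrightarrow> j < k + m1 \<Longrightarrow> G k \<le> c * window_sum F m2 k"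
  shows "window_sum G m1 j \<le> 4 * real m1 * real m2 * c * window_sum F (m1 + m2) j"
proof -
  have "window_sum G m1 j \<le> 2 * real m1 * (c * (2 * real m2 * window_sum F (m1 + m2) j))"
  proof (rule window_sum_le[OF G0])
    fix k assume k: "k < j + m1" "j < k + m1"
    have "window_sum F m2 k \<le> 2 * real m2 * window_sum F (m1 + m2) j"
      by (rule window_sum_le[OF F], rule le_window_sum[OF F]) (use k in auto)
    then show "G k \<le> c * (2 * real m2 * window_sum F (m1 + m2) j)"
      using G[OF k] c by (meson mult_left_mono order_trans)
  qed
  then show ?thesis by (simp add: algebra_simps)
qed

lemma summable_window_sum:
  assumes F: "\<And>k. 0 \<le> F k" and "summable F"
  shows "summable (window_sum F m)" and "(\<Sum>j. window_sum F m j) \<le> 2 * real m * (\<Sum>k. F k)"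
proof -
  define G where "G i j = (if i \<le> j then F (j - i) else 0)" for i j
  have G: "G i sums (\<Sum>k. F k)" for i
  proof -
    have "(\<lambda>j. G i (j + i)) sums (\<Sum>k. F k)" using assms by (simp add: G_def summable_sums)
    then show ?thesis by (subst (asm) sums_zero_iff_shift) (auto simp: G_def)
  qed
  have S: "summable (\<lambda>j. F (j + i))" for i using assms by simp
  have le: "(\<Sum>j. F (j + i)) \<le> (\<Sum>k. F k)" for i
    using suminf_split_initial_segment[OF assms(2), of i] sum_nonneg[of "{..<i}" F] F by simp
  have sG: "summable (\<lambda>j. F (j + i) + G i j)" for i
    using S G by (intro summable_add) (auto simp: sums_iff)
  have eq: "window_sum F m = (\<lambda>j. \<Sum>i<m. F (j + i) + G i j)"
    by (simp add: window_sum_def G_def fun_eq_iff)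
  show "summable (window_sum F m)" unfolding eq by (intro summable_sum sG)
  have "(\<Sum>j. window_sum F m j) = (\<Sum>i<m. \<Sum>j. F (j + i) + G i j)"
    unfolding eq by (rule suminf_sum) (rule sG)
  also have "\<dots> = (\<Sum>i<m. (\<Sum>j. F (j + i)) + (\<Sum>k. F k))"
    using S G by (intro sum.cong refl) (simp add: suminf_add[symmetric] sums_iff)
  also have "\<dots> \<le> (\<Sum>i<m. 2 * (\<Sum>k. F k))" by (intro sum_mono) (use le in auto)
  finally show "(\<Sum>j. window_sum F m j) \<le> 2 * real m * (\<Sum>k. F k)" by simp
qed

lemma summable_window_dominated:
  assumes F: "\<And>k. 0 \<le> F k" and s: "summable F" and C: "0 \<le> C"
    and g: "\<And>j. 0 \<le> g j" and gb: "\<And>j. g j \<le> C * window_sum F m j"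
  shows "summable g" and "(\<Sum>j. g j) \<le> C * (2 * real m * (\<Sum>k. F k))"
proof -
  have sC: "summable (\<lambda>j. C * window_sum F m j)"
    using summable_window_sum(1)[OF F s] by (rule summable_mult)
  show sg: "summable g" by (rule summable_comparison_test'[OF sC, of 0]) (use g gb in auto)
  have "(\<Sum>j. g j) \<le> (\<Sum>j. C * window_sum F m j)" by (rule suminf_le[OF gb sg sC])
  also have "\<dots> = C * (\<Sum>j. window_sum F m j)"
    using summable_window_sum(1)[OF F s] by (rule suminf_mult)
  also have "\<dots> \<le> C * (2 * real m * (\<Sum>k. F k))"
    using summable_window_sum(2)[OF F s] C by (rule mult_left_mono)
  finally show "(\<Sum>j. g j) \<le> C * (2 * real m * (\<Sum>k. F k))" .
qed

definition linear_op :: "(cseq \<Rightarrow> cseq) \<Rightarrow> bool" where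
  "linear_op T \<longleftrightarrow> (\<forall>u v c. T (\<lambda>k. c * u k + v k) = (\<lambda>k. c * T u k + T v k))"

text \<open>Each weighted entry of \<open>T v\<close> is controlled by the weighted entries of \<open>v\<close> in a window
  of fixed width around it; for the compact class the controlling constant becomes arbitrarily
  small far out.  Such operators are bounded, respectively compact, on \<open>\<ell>\<^sup>2\<^sub>\<mu>\<close>.\<close>

definition banded_bounded :: "real \<Rightarrow> (cseq \<Rightarrow> cseq) \<Rightarrow> bool" where
  "banded_bounded mu T \<longleftrightarrow> linear_op T \<and>
     (\<exists>C m. 0 \<le> C \<and> (\<forall>v j. l2_term mu (T v) j \<le> C * window_sum (l2_term mu v) m j))"

definition banded_compact :: "real \<Rightarrow> (cseq \<Rightarrow> cseq) \<Rightarrow> bool" where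
  "banded_compact mu T \<longleftrightarrow> banded_bounded mu T \<and>
     (\<exists>m. \<forall>e>0. \<exists>M. \<forall>v j. M \<le> j \<longrightarrow> l2_term mu (T v) j \<le> e * window_sum (l2_term mu v) m j)"

lemma banded_boundedI:
  "linear_op T \<Longrightarrow> 0 \<le> C \<Longrightarrow> (\<And>v j. l2_term mu (T v) j \<le> C * window_sum (l2_term mu v) m j)
    \<Longrightarrow> banded_bounded mu T"
  unfolding banded_bounded_def by blast

lemma banded_compactI:
  assumes "banded_bounded mu T" "0 \<le> K"
    and "\<And>e. e > 0 \<Longrightarrow> \<exists>M. \<forall>v j. M \<le> j \<longrightarrow>
           l2_term mu (T v) j \<le> K * e * window_sum (l2_term mu v) m j"
  shows "banded_compact mu T"
  unfolding banded_compact_def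
proof (rule conjI[OF assms(1)], rule exI[of _ m], intro allI impI)
  fix e :: real assume "e > 0"
  then obtain M where M: "\<And>v j. M \<le> j \<Longrightarrow>
      l2_term mu (T v) j \<le> K * (e / (K + 1)) * window_sum (l2_term mu v) m j"
    using assms(3)[of "e / (K + 1)"] assms(2) by auto
  have "K * (e / (K + 1)) \<le> e" using \<open>e > 0\<close> assms(2) by (simp add: field_simps)
  then have "K * (e / (K + 1)) * window_sum (l2_term mu v) m j \<le> e * window_sum (l2_term mu v) m j"
    for v j by (intro mult_right_mono window_sum_nonneg l2_term_nonneg)
  then have "l2_term mu (T v) j \<le> e * window_sum (l2_term mu v) m j" if "M \<le> j" for v j
    using M[OF that, of v] by (meson order_trans)
  then show "\<exists>M. \<forall>v j. M \<le> j \<longrightarrow> l2_term mu (T v) j \<le> e * window_sum (l2_term mu v) m j"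
    by blast
qed

lemma banded_compact_imp_bounded: "banded_compact mu T \<Longrightarrow> banded_bounded mu T"
  unfolding banded_compact_def by blast

lemma banded_bounded_linear: "banded_bounded mu T \<Longrightarrow> linear_op T"
  unfolding banded_bounded_def by blast

lemma linear_op_diff: "linear_op T \<Longrightarrow> T (\<lambda>k. x k - y k) = (\<lambda>k. T x k - T y k)"
proof -
  assume "linear_op T"
  then have "T (\<lambda>k. (-1) * y k + x k) = (\<lambda>k. (-1) * T y k + T x k)" unfolding linear_op_def by blast
  then show ?thesis by simp
qed

lemma l2_term_comp_le:
  assumes S: "l2_term mu (S (T v)) j \<le> a * window_sum (l2_term mu (T v)) ms j"
    and T: "\<And>k. k < j + ms \<Longrightarrow> j < k + ms \<Longrightarrow>
              l2_term mu (T v) k \<le> b * window_sum (l2_term mu v) mt k"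
    and "0 \<le> a" "0 \<le> b"
  shows "l2_term mu (S (T v)) j \<le> 4 * real ms * real mt * a * b * window_sum (l2_term mu v) (ms + mt) j"
proof -
  have "window_sum (l2_term mu (T v)) ms j \<le>
      4 * real ms * real mt * b * window_sum (l2_term mu v) (ms + mt) j"
    by (rule window_sum_window_sum[OF l2_term_nonneg l2_term_nonneg \<open>0 \<le> b\<close> T])
  then have "a * window_sum (l2_term mu (T v)) ms j \<le>
      a * (4 * real ms * real mt * b * window_sum (l2_term mu v) (ms + mt) j)"
    by (rule mult_left_mono) (rule \<open>0 \<le> a\<close>)
  also have "\<dots> = 4 * real ms * real mt * a * b * window_sum (l2_term mu v) (ms + mt) j"
    by (simp add: algebra_simps)
  finally show ?thesis using S by linarith
qed

lemma banded_bounded_comp: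
  assumes S: "banded_bounded mu S" and T: "banded_bounded mu T"
  shows "banded_bounded mu (S \<circ> T)"
proof -
  obtain Cs ms where Cs: "0 \<le> Cs"
    and bs: "\<And>v j. l2_term mu (S v) j \<le> Cs * window_sum (l2_term mu v) ms j"
    using S unfolding banded_bounded_def by blast
  obtain Ct mt where Ct: "0 \<le> Ct"
    and bt: "\<And>v j. l2_term mu (T v) j \<le> Ct * window_sum (l2_term mu v) mt j"
    using T unfolding banded_bounded_def by blast
  have "linear_op (S \<circ> T)"
    using banded_bounded_linear[OF S] banded_bounded_linear[OF T] by (simp add: linear_op_def)
  moreover have "l2_term mu ((S \<circ> T) v) j \<le>
      (4 * real ms * real mt * Cs * Ct) * window_sum (l2_term mu v) (ms + mt) j" for v j
    using l2_term_comp_le[where S = S and T = T and a = Cs and b = Ct and ms = ms and mt = mt,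
        OF bs bt Cs Ct] by simp
  ultimately show ?thesis using Cs Ct by (intro banded_boundedI[where C = "4 * real ms * real mt * Cs * Ct" and m = "ms + mt"]) auto
qed

lemma banded_compact_comp_left:
  assumes S: "banded_bounded mu S" and T: "banded_compact mu T"
  shows "banded_compact mu (S \<circ> T)"
proof -
  obtain Cs ms where Cs: "0 \<le> Cs"
    and bs: "\<And>v j. l2_term mu (S v) j \<le> Cs * window_sum (l2_term mu v) ms j"
    using S unfolding banded_bounded_def by blast
  obtain mt where tt: "\<And>e. e > 0 \<Longrightarrow> \<exists>M. \<forall>v j. M \<le> j \<longrightarrow>
      l2_term mu (T v) j \<le> e * window_sum (l2_term mu v) mt j"
    using T unfolding banded_compact_def by blast
  have "\<exists>M. \<forall>v j. M \<le> j \<longrightarrow>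
      l2_term mu ((S \<circ> T) v) j \<le> 4 * real ms * real mt * Cs * e * window_sum (l2_term mu v) (ms + mt) j"
    if e: "e > 0" for e
  proof -
    obtain M where M: "\<And>v j. M \<le> j \<Longrightarrow> l2_term mu (T v) j \<le> e * window_sum (l2_term mu v) mt j"
      using tt[OF e] by blast
    have "l2_term mu ((S \<circ> T) v) j \<le> 4 * real ms * real mt * Cs * e * window_sum (l2_term mu v) (ms + mt) j"
      if "M + ms \<le> j" for v j
      using l2_term_comp_le[where S = S and T = T and a = Cs and b = e and ms = ms and mt = mt,
          OF bs M Cs] that \<open>e > 0\<close> by simp
    then show ?thesis by blast
  qed
  then show ?thesis
    using Cs banded_bounded_comp[OF S banded_compact_imp_bounded[OF T]]
    by (intro banded_compactI[where K = "4 * real ms * real mt * Cs" and m = "ms + mt"]) auto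
qed

lemma banded_compact_comp_right:
  assumes S: "banded_compact mu S" and T: "banded_bounded mu T"
  shows "banded_compact mu (S \<circ> T)"
proof -
  obtain ms where ss: "\<And>e. e > 0 \<Longrightarrow> \<exists>M. \<forall>v j. M \<le> j \<longrightarrow>
      l2_term mu (S v) j \<le> e * window_sum (l2_term mu v) ms j"
    using S unfolding banded_compact_def by blast
  obtain Ct mt where Ct: "0 \<le> Ct"
    and bt: "\<And>v j. l2_term mu (T v) j \<le> Ct * window_sum (l2_term mu v) mt j"
    using T unfolding banded_bounded_def by blast
  have "\<exists>M. \<forall>v j. M \<le> j \<longrightarrow>
      l2_term mu ((S \<circ> T) v) j \<le> 4 * real ms * real mt * Ct * e * window_sum (l2_term mu v) (ms + mt) j"
    if e: "e > 0" for e
  proof -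
    obtain M where M: "\<And>v j. M \<le> j \<Longrightarrow> l2_term mu (S v) j \<le> e * window_sum (l2_term mu v) ms j"
      using ss[OF e] by blast
    have "l2_term mu ((S \<circ> T) v) j \<le> 4 * real ms * real mt * Ct * e * window_sum (l2_term mu v) (ms + mt) j"
      if "M \<le> j" for v j
      using l2_term_comp_le[where S = S and T = T and a = e and b = Ct and ms = ms and mt = mt,
          OF M[OF that] bt _ Ct] \<open>e > 0\<close> by (simp add: mult_ac)
    then show ?thesis by blast
  qed
  then show ?thesis
    using Ct banded_bounded_comp[OF banded_compact_imp_bounded[OF S] T]
    by (intro banded_compactI[where K = "4 * real ms * real mt * Ct" and m = "ms + mt"]) auto
qed

lemma banded_bounded_add:
  assumes S: "banded_bounded mu S" and T: "banded_bounded mu T"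
  shows "banded_bounded mu (\<lambda>v k. S v k + T v k)"
proof -
  obtain Cs ms where Cs: "0 \<le> Cs"
    and bs: "\<And>v j. l2_term mu (S v) j \<le> Cs * window_sum (l2_term mu v) ms j"
    using S unfolding banded_bounded_def by blast
  obtain Ct mt where Ct: "0 \<le> Ct"
    and bt: "\<And>v j. l2_term mu (T v) j \<le> Ct * window_sum (l2_term mu v) mt j"
    using T unfolding banded_bounded_def by blast
  show ?thesis
  proof (rule banded_boundedI[where C = "2 * Cs + 2 * Ct" and m = "max ms mt"])
    show "linear_op (\<lambda>v k. S v k + T v k)"
      using banded_bounded_linear[OF S] banded_bounded_linear[OF T]
      by (simp add: linear_op_def algebra_simps)
    fix v j
    have w1: "window_sum (l2_term mu v) ms j \<le> window_sum (l2_term mu v) (max ms mt) j"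
      and w2: "window_sum (l2_term mu v) mt j \<le> window_sum (l2_term mu v) (max ms mt) j"
      by (intro window_sum_mono l2_term_nonneg; simp)+
    show "l2_term mu (\<lambda>k. S v k + T v k) j \<le> (2 * Cs + 2 * Ct) * window_sum (l2_term mu v) (max ms mt) j"
      using l2_term_add_le[of mu "S v" "T v" j] bs[of v j] bt[of v j]
        mult_left_mono[OF w1 Cs] mult_left_mono[OF w2 Ct] by (simp add: algebra_simps)
  qed (use Cs Ct in simp)
qed

lemma banded_compact_add:
  assumes S: "banded_compact mu S" and T: "banded_compact mu T"
  shows "banded_compact mu (\<lambda>v k. S v k + T v k)"
proof -
  obtain ms where ss: "\<And>e. e > 0 \<Longrightarrow> \<exists>M. \<forall>v j. M \<le> j \<longrightarrow>
      l2_term mu (S v) j \<le> e * window_sum (l2_term mu v) ms j"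
    using S unfolding banded_compact_def by blast
  obtain mt where tt: "\<And>e. e > 0 \<Longrightarrow> \<exists>M. \<forall>v j. M \<le> j \<longrightarrow>
      l2_term mu (T v) j \<le> e * window_sum (l2_term mu v) mt j"
    using T unfolding banded_compact_def by blast
  have "\<exists>M. \<forall>v j. M \<le> j \<longrightarrow>
      l2_term mu (\<lambda>k. S v k + T v k) j \<le> 4 * e * window_sum (l2_term mu v) (max ms mt) j"
    if e: "e > 0" for e
  proof -
    obtain M1 where M1: "\<And>v j. M1 \<le> j \<Longrightarrow> l2_term mu (S v) j \<le> e * window_sum (l2_term mu v) ms j"
      using ss[OF e] by blast
    obtain M2 where M2: "\<And>v j. M2 \<le> j \<Longrightarrow> l2_term mu (T v) j \<le> e * window_sum (l2_term mu v) mt j"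
      using tt[OF e] by blast
    have "l2_term mu (\<lambda>k. S v k + T v k) j \<le> 4 * e * window_sum (l2_term mu v) (max ms mt) j"
      if "max M1 M2 \<le> j" for v j
    proof -
      have "window_sum (l2_term mu v) ms j \<le> window_sum (l2_term mu v) (max ms mt) j"
        and "window_sum (l2_term mu v) mt j \<le> window_sum (l2_term mu v) (max ms mt) j"
        by (intro window_sum_mono l2_term_nonneg; simp)+
      then have "e * window_sum (l2_term mu v) ms j \<le> e * window_sum (l2_term mu v) (max ms mt) j"
        and "e * window_sum (l2_term mu v) mt j \<le> e * window_sum (l2_term mu v) (max ms mt) j"
        using e by simp_all
      then show ?thesis
        using l2_term_add_le[of mu "S v" "T v" j] M1[of j v] M2[of j v] that by simp
    qed
    then show ?thesis by blast
  qed
  then show ?thesis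
    using banded_bounded_add[OF banded_compact_imp_bounded[OF S] banded_compact_imp_bounded[OF T]]
    by (intro banded_compactI[where K = 4 and m = "max ms mt"]) auto
qed

lemma banded_compact_zero: "banded_compact mu (\<lambda>v k. 0)"
  by (rule banded_compactI[where K = 0 and m = 0])
    (auto intro: banded_boundedI[where C = 0 and m = 0] simp: linear_op_def l2_term_def window_sum_def)

lemma banded_compact_sum:
  "finite A \<Longrightarrow> (\<And>i. i \<in> A \<Longrightarrow> banded_compact mu (T i)) \<Longrightarrow>
    banded_compact mu (\<lambda>v k. \<Sum>i\<in>A. T i v k)"
proof (induction A rule: finite_induct)
  case (insert x F)
  then show ?case
    using banded_compact_add[of mu "T x" "\<lambda>v k. \<Sum>i\<in>F. T i v k"] by simp
qed (simp add: banded_compact_zero)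

lemma banded_bounded_in_l2:
  assumes "banded_bounded mu T" "in_l2 mu v"
  shows "in_l2 mu (T v)"
proof -
  obtain C m where C: "0 \<le> C" and b: "\<And>v j. l2_term mu (T v) j \<le> C * window_sum (l2_term mu v) m j"
    using assms(1) unfolding banded_bounded_def by auto
  have "summable (l2_term mu v)" using assms(2) by (simp add: in_l2_iff_summable)
  from summable_window_dominated(1)[OF l2_term_nonneg this C l2_term_nonneg b]
  show ?thesis by (simp add: in_l2_iff_summable)
qed

lemma powr_le_by_ratio:
  fixes a b K t :: real
  assumes "0 < a" "0 < b" "1 \<le> K" "a \<le> K * b" "b \<le> K * a"
  shows "a powr t \<le> K powr \<bar>t\<bar> * b powr t"
proof (cases "t \<ge> 0")
  case True
  have "a powr t \<le> (K * b) powr t" using assms True by (intro powr_mono2) auto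
  then show ?thesis using assms True by (simp add: powr_mult)
next
  case False
  have "b powr (- t) \<le> (K * a) powr (- t)" using assms False by (intro powr_mono2) auto
  then have "inverse (a powr (- t)) \<le> K powr (- t) * inverse (b powr (- t))"
    using assms by (simp add: powr_mult field_simps)
  then show ?thesis using False by (simp add: powr_minus)
qed

lemma l2_weight_le:
  assumes "k < j + m" "j < k + m"
  shows "l2_weight mu j \<le> (real m + 1) powr (2 * \<bar>mu\<bar>) * l2_weight mu k"
proof -
  have "(real j + 1) powr (2 * mu) \<le> (real m + 1) powr \<bar>2 * mu\<bar> * (real k + 1) powr (2 * mu)"
  proof (rule powr_le_by_ratio)
    have "0 \<le> real k * real m" "0 \<le> real j * real m" by simp_all
    moreover have "real j < real k + real m" "real k < real j + real m"
      using assms by (simp_all flip: of_nat_add)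
    ultimately have "real j + 1 \<le> real k * real m + real k + real m + 1"
      "real k + 1 \<le> real j * real m + real j + real m + 1" by linarith+
    then show "real j + 1 \<le> (real m + 1) * (real k + 1)" "real k + 1 \<le> (real m + 1) * (real j + 1)"
      by (simp_all add: algebra_simps)
  qed simp_all
  then show ?thesis by (simp add: l2_weight_def abs_mult)
qed

lemma weighted_entry_le_window_sum:
  assumes "k < j + m" "j < k + m"
  shows "(cmod (v k))^2 * l2_weight mu j \<le> (real m + 1) powr (2 * \<bar>mu\<bar>) * window_sum (l2_term mu v) m j"
proof -
  have "(cmod (v k))^2 * l2_weight mu j \<le> (real m + 1) powr (2 * \<bar>mu\<bar>) * l2_term mu v k"
    using l2_weight_le[OF assms, of mu] by (simp add: l2_term_def mult_left_mono mult.left_commute)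
  also have "\<dots> \<le> (real m + 1) powr (2 * \<bar>mu\<bar>) * window_sum (l2_term mu v) m j"
    by (intro mult_left_mono le_window_sum l2_term_nonneg assms) simp
  finally show ?thesis .
qed

lemma l2_term_le_two_entries:
  assumes w: "cmod (w j) \<le> d * (cmod (u ja) + cmod (u jb))" and "0 \<le> d"
    and ja: "ja < j + m" "j < ja + m" and jb: "jb < j + m" "j < jb + m"
  shows "l2_term mu w j \<le> 4 * (real m + 1) powr (2 * \<bar>mu\<bar>) * d^2 * window_sum (l2_term mu u) m j"
proof -
  define K where "K = (real m + 1) powr (2 * \<bar>mu\<bar>)"
  have "(cmod (w j))^2 \<le> d^2 * (cmod (u ja) + cmod (u jb))^2"
    using power_mono[OF w] by (simp add: power_mult_distrib)
  also have "\<dots> \<le> d^2 * (2 * (cmod (u ja))^2 + 2 * (cmod (u jb))^2)"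
    using sum_squares_bound[of "cmod (u ja)" "cmod (u jb)"]
    by (intro mult_left_mono) (simp_all add: power2_eq_square algebra_simps)
  finally have "(cmod (w j))^2 * l2_weight mu j \<le>
      d^2 * (2 * (cmod (u ja))^2 + 2 * (cmod (u jb))^2) * l2_weight mu j"
    using l2_weight_pos[of mu j] by (intro mult_right_mono) simp_all
  then have "l2_term mu w j \<le>
      d^2 * (2 * ((cmod (u ja))^2 * l2_weight mu j) + 2 * ((cmod (u jb))^2 * l2_weight mu j))"
    by (simp add: l2_term_def algebra_simps)
  also have "\<dots> \<le> d^2 * (2 * (K * window_sum (l2_term mu u) m j) + 2 * (K * window_sum (l2_term mu u) m j))"
    unfolding K_def using ja jb by (intro mult_left_mono add_mono weighted_entry_le_window_sum) simp_all
  finally show ?thesis by (simp add: K_def algebra_simps)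
qed

lemma banded_bounded_if_two_entries:
  assumes "linear_op T"
    and T: "\<And>u j. cmod (T u j) \<le> d j * (cmod (u (fa j)) + cmod (u (fb j)))"
    and fa: "\<And>j. fa j < j + m" "\<And>j. j < fa j + m" and fb: "\<And>j. fb j < j + m" "\<And>j. j < fb j + m"
    and d: "\<And>j. 0 \<le> d j" "\<And>j. d j \<le> D"
  shows "banded_bounded mu T"
proof (rule banded_boundedI[OF assms(1)])
  define K where "K = (real m + 1) powr (2 * \<bar>mu\<bar>)"
  show "0 \<le> 4 * K * D^2" by (simp add: K_def)
  fix v j
  have "4 * K * (d j)^2 \<le> 4 * K * D^2"
    using d[of j] by (simp add: K_def power_mono)
  then have "4 * K * (d j)^2 * window_sum (l2_term mu v) m j \<le> 4 * K * D^2 * window_sum (l2_term mu v) m j"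
    by (intro mult_right_mono window_sum_nonneg l2_term_nonneg)
  then show "l2_term mu (T v) j \<le> 4 * K * D^2 * window_sum (l2_term mu v) m j"
    using l2_term_le_two_entries[where w = "T v" and u = v and mu = mu,
        OF T[of v j] d(1) fa(1,2)[of j] fb(1,2)[of j]]
    unfolding K_def by linarith
qed

lemma banded_compact_if_two_entries:
  assumes "linear_op T"
    and T: "\<And>u j. cmod (T u j) \<le> d j * (cmod (u (fa j)) + cmod (u (fb j)))"
    and fa: "\<And>j. fa j < j + m" "\<And>j. j < fa j + m" and fb: "\<And>j. fb j < j + m" "\<And>j. j < fb j + m"
    and d: "\<And>j. 0 \<le> d j" "d \<longlonglongrightarrow> 0"
  shows "banded_compact mu T"
proof -
  define K where "K = (real m + 1) powr (2 * \<bar>mu\<bar>)"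
  have "Bseq d" using d(2) by (intro convergent_imp_Bseq convergentI)
  then obtain D where "\<forall>j. norm (d j) \<le> D" using BseqE by blast
  then have "d j \<le> D" for j by (metis abs_le_D1 real_norm_def)
  then have "banded_bounded mu T" by (intro banded_bounded_if_two_entries[OF assms(1) T fa fb d(1)])
  moreover have "\<exists>M. \<forall>v j. M \<le> j \<longrightarrow> l2_term mu (T v) j \<le> 4 * K * e * window_sum (l2_term mu v) m j"
    if "e > 0" for e
  proof -
    have "(\<lambda>j. (d j)^2) \<longlonglongrightarrow> 0" using tendsto_power[OF d(2), of 2] by simp
    then obtain M where M: "\<And>j. M \<le> j \<Longrightarrow> (d j)^2 \<le> e"
      using \<open>e > 0\<close> by (metis (no_types, lifting) LIMSEQ_le_const2 eventually_sequentially
          order_tendsto_iff less_imp_le)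
    have "l2_term mu (T v) j \<le> 4 * K * e * window_sum (l2_term mu v) m j" if "M \<le> j" for v j
    proof -
      have "4 * K * (d j)^2 * window_sum (l2_term mu v) m j \<le> 4 * K * e * window_sum (l2_term mu v) m j"
        using M[OF that] by (intro mult_right_mono window_sum_nonneg l2_term_nonneg) (simp_all add: K_def)
      then show ?thesis
        using l2_term_le_two_entries[where w = "T v" and u = v and mu = mu,
            OF T[of v j] d(1) fa(1,2)[of j] fb(1,2)[of j]]
        unfolding K_def by linarith
    qed
    then show ?thesis by blast
  qed
  ultimately show ?thesis by (intro banded_compactI[where K = "4 * K" and m = m]) (auto simp: K_def)
qed

lemma window_sum_tendsto_0:
  assumes "\<And>k. (\<lambda>n. vs n k) \<longlonglongrightarrow> 0"
  shows "(\<lambda>n. window_sum (l2_term mu (vs n)) m j) \<longlonglongrightarrow> 0"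
proof -
  have l2: "(\<lambda>n. l2_term mu (vs n) k) \<longlonglongrightarrow> 0" for k
    using tendsto_mult[OF tendsto_power[OF tendsto_norm[OF assms[of k]], of 2] tendsto_const[of "l2_weight mu k"]]
    by (simp add: l2_term_def)
  have "(\<lambda>n. \<Sum>i<m. l2_term mu (vs n) (j + i) + (if i \<le> j then l2_term mu (vs n) (j - i) else 0))
      \<longlonglongrightarrow> (\<Sum>i<m. 0 + 0)"
  proof (intro tendsto_sum tendsto_add l2)
    show "(\<lambda>n. if i \<le> j then l2_term mu (vs n) (j - i) else 0) \<longlonglongrightarrow> 0" for i
      by (cases "i \<le> j") (simp_all add: l2)
  qed
  then show ?thesis by (simp add: window_sum_def)
qed

lemma banded_compact_tail_le:
  assumes "banded_compact mu T" "e > 0"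
  obtains M where "\<And>v. in_l2 mu v \<Longrightarrow>
    (\<Sum>j. if j < M then 0 else l2_term mu (T v) j) \<le> e * (\<Sum>k. l2_term mu v k)"
proof -
  obtain m where tt: "\<And>e. e > 0 \<Longrightarrow> \<exists>M. \<forall>v j. M \<le> j \<longrightarrow>
      l2_term mu (T v) j \<le> e * window_sum (l2_term mu v) m j"
    using assms(1) unfolding banded_compact_def by blast
  define e' where "e' = e / (2 * real m + 1)"
  have e': "0 < e'" "e' * (2 * real m) \<le> e" using assms(2) by (simp_all add: e'_def field_simps)
  obtain M where M: "\<And>v j. M \<le> j \<Longrightarrow> l2_term mu (T v) j \<le> e' * window_sum (l2_term mu v) m j"
    using tt[OF e'(1)] by blast
  have "(\<Sum>j. if j < M then 0 else l2_term mu (T v) j) \<le> e * (\<Sum>k. l2_term mu v k)"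
    if v: "in_l2 mu v" for v
  proof -
    have "(\<Sum>j. if j < M then 0 else l2_term mu (T v) j) \<le> e' * (2 * real m * (\<Sum>k. l2_term mu v k))"
      using v e'(1) M window_sum_nonneg[OF l2_term_nonneg]
      by (intro summable_window_dominated(2)[OF l2_term_nonneg])
        (auto simp: in_l2_iff_summable l2_term_nonneg)
    also have "\<dots> \<le> e * (\<Sum>k. l2_term mu v k)"
      using e'(2) suminf_nonneg[of "l2_term mu v"] v
      by (simp add: mult.assoc[symmetric] mult_right_mono in_l2_iff_summable l2_term_nonneg)
    finally show ?thesis .
  qed
  then show ?thesis using that by blast
qed

lemma suminf_split_head:
  fixes f :: "nat \<Rightarrow> real"
  assumes "summable f"
  shows "(\<Sum>j. f j) = (\<Sum>j<M. f j) + (\<Sum>j. if j < M then 0 else f j)"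
proof -
  have head: "summable (\<lambda>j. if j < M then f j else 0)" by (rule summable_finite[of "{..<M}"]) auto
  have "(\<lambda>j. f j - (if j < M then f j else 0)) = (\<lambda>j. if j < M then 0 else f j)" by auto
  then have tail: "summable (\<lambda>j. if j < M then 0 else f j)"
    using summable_diff[OF assms head] by simp
  have "(\<Sum>j. f j) = (\<Sum>j. (if j < M then f j else 0) + (if j < M then 0 else f j))"
    by (intro suminf_cong) simp
  also have "\<dots> = (\<Sum>j. if j < M then f j else 0) + (\<Sum>j. if j < M then 0 else f j)"
    by (rule suminf_add[OF head tail, symmetric])
  also have "(\<Sum>j. if j < M then f j else 0) = (\<Sum>j<M. f j)" by (subst suminf_finite[of "{..<M}"]) auto
  finally show ?thesis .
qed

lemma banded_bounded_l2_term_tendsto_0: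
  assumes "banded_bounded mu T" "\<And>k. (\<lambda>n. vs n k) \<longlonglongrightarrow> 0"
  shows "(\<lambda>n. l2_term mu (T (vs n)) j) \<longlonglongrightarrow> 0"
proof -
  obtain C m where C: "\<And>v j. l2_term mu (T v) j \<le> C * window_sum (l2_term mu v) m j"
    using assms(1) unfolding banded_bounded_def by blast
  have lim: "(\<lambda>n. C * window_sum (l2_term mu (vs n)) m j) \<longlonglongrightarrow> 0"
    using tendsto_mult_right_zero[OF window_sum_tendsto_0[OF assms(2)]] by simp
  show ?thesis
    by (intro tendsto_sandwich[OF _ _ tendsto_const lim]) (simp_all add: l2_term_nonneg C)
qed

lemma banded_compact_tendsto_0:
  assumes T: "banded_compact mu T" and l2: "\<And>n. in_l2 mu (vs n)"
    and bd: "\<And>n. (\<Sum>k. l2_term mu (vs n) k) \<le> Bd" and co: "\<And>k. (\<lambda>n. vs n k) \<longlonglongrightarrow> 0"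
  shows "(\<lambda>n. \<Sum>k. l2_term mu (T (vs n)) k) \<longlonglongrightarrow> 0"
proof (rule LIMSEQ_I)
  fix r :: real assume r: "0 < r"
  have TB: "banded_bounded mu T" using T by (rule banded_compact_imp_bounded)
  have "0 \<le> Bd" using bd[of 0] suminf_nonneg[of "l2_term mu (vs 0)"] l2[of 0]
    by (simp add: in_l2_iff_summable l2_term_nonneg)
  define e where "e = r / (2 * (Bd + 1))"
  have e: "0 < e" "e * Bd < r / 2" using r \<open>0 \<le> Bd\<close> by (simp_all add: e_def field_simps)
  obtain M where tail: "\<And>v. in_l2 mu v \<Longrightarrow>
      (\<Sum>j. if j < M then 0 else l2_term mu (T v) j) \<le> e * (\<Sum>k. l2_term mu v k)"
    using banded_compact_tail_le[OF T e(1)] by blast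
  have "(\<lambda>n. \<Sum>j<M. l2_term mu (T (vs n)) j) \<longlonglongrightarrow> (\<Sum>j<M. 0)"
    by (intro tendsto_sum banded_bounded_l2_term_tendsto_0[OF TB co])
  then obtain N where "\<forall>n\<ge>N. norm ((\<Sum>j<M. l2_term mu (T (vs n)) j) - 0) < r / 2"
    using LIMSEQ_D[of _ 0 "r / 2"] r by force
  then have N: "(\<Sum>j<M. l2_term mu (T (vs n)) j) < r / 2" if "n \<ge> N" for n
    using that by auto
  have "norm ((\<Sum>k. l2_term mu (T (vs n)) k) - 0) < r" if "n \<ge> N" for n
  proof -
    have s: "summable (l2_term mu (T (vs n)))"
      using banded_bounded_in_l2[OF TB l2] by (simp add: in_l2_iff_summable)
    have "e * (\<Sum>k. l2_term mu (vs n) k) \<le> e * Bd" using bd[of n] e(1) by simp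
    then have "(\<Sum>k. l2_term mu (T (vs n)) k) < r / 2 + r / 2"
      using suminf_split_head[OF s, of M] N[OF that] tail[OF l2[of n]] e(2) by linarith
    moreover have "0 \<le> (\<Sum>k. l2_term mu (T (vs n)) k)" using s by (intro suminf_nonneg l2_term_nonneg)
    ultimately show ?thesis by simp
  qed
  then show "\<exists>N. \<forall>n\<ge>N. norm ((\<Sum>k. l2_term mu (T (vs n)) k) - 0) < r" by blast
qed

section \<open>Compactness of banded operators with decaying entries\<close>

lemma diagonal_convergent_subseq:
  fixes z :: "nat \<Rightarrow> nat \<Rightarrow> 'a::heine_borel"
  assumes "\<And>i. bounded (range (\<lambda>n. z n i))"
  obtains r where "strict_mono r" "\<And>i. convergent (\<lambda>n. z (r n) i)"
proof -
  interpret subseqs "\<lambda>i s. convergent (\<lambda>n. z (s n) i)"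
  proof
    fix i and s :: "nat \<Rightarrow> nat"
    have "bounded (range (\<lambda>n. z (s n) i))" by (rule bounded_subset[OF assms[of i]]) auto
    then obtain l r' where "strict_mono r'" "((\<lambda>n. z (s n) i) \<circ> r') \<longlonglongrightarrow> l"
      using bounded_imp_convergent_subsequence by blast
    then show "\<exists>r'. strict_mono r' \<and> convergent (\<lambda>n. z ((s \<circ> r') n) i)"
      by (auto simp: convergent_def comp_def)
  qed
  have "convergent (\<lambda>n. z (diagseq n) i)" for i
  proof -
    have "convergent (\<lambda>n. z ((diagseq \<circ> (+) (Suc i)) n) i)"
    proof (rule diagseq_holds)
      fix r s n assume "strict_mono (r :: nat \<Rightarrow> nat)" "convergent (\<lambda>m. z (s m) n)"
      then show "convergent (\<lambda>m. z ((s \<circ> r) m) n)"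
        by (auto simp: convergent_def comp_def intro: LIMSEQ_subseq_LIMSEQ[unfolded comp_def])
    qed
    then obtain L where "(\<lambda>n. z (diagseq (Suc i + n)) i) \<longlonglongrightarrow> L"
      by (auto simp: convergent_def comp_def)
    then have "(\<lambda>n. z (diagseq (n + Suc i)) i) \<longlonglongrightarrow> L" by (simp add: add.commute)
    from LIMSEQ_offset[OF this] show ?thesis by (auto simp: convergent_def)
  qed
  then show ?thesis using that subseq_diagseq by blast
qed

lemma in_l2_pointwise_limit:
  assumes l2: "\<And>n. in_l2 mu (us n)" and bd: "\<And>n. (\<Sum>k. l2_term mu (us n) k) \<le> B"
    and lim: "\<And>k. (\<lambda>n. us n k) \<longlonglongrightarrow> u k"
  shows "in_l2 mu u" and "(\<Sum>k. l2_term mu u k) \<le> B"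
proof -
  have fin: "sum (l2_term mu u) I \<le> B" if "finite I" for I
  proof (rule LIMSEQ_le_const2)
    show "(\<lambda>n. sum (l2_term mu (us n)) I) \<longlonglongrightarrow> sum (l2_term mu u) I"
      unfolding l2_term_def by (intro tendsto_intros lim)
    show "\<exists>M. \<forall>n\<ge>M. sum (l2_term mu (us n)) I \<le> B"
      using sum_le_suminf[OF _ that, of "l2_term mu (us _)"] l2 bd
      by (metis in_l2_iff_summable l2_term_nonneg order_trans)
  qed
  have "summable (l2_term mu u)" by (rule bounded_imp_summable[OF l2_term_nonneg fin]) simp
  then show "in_l2 mu u" by (simp add: in_l2_iff_summable)
  show "(\<Sum>k. l2_term mu u k) \<le> B"
    by (rule suminf_le_const[OF \<open>summable (l2_term mu u)\<close> fin]) simp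
qed

lemma l2_sum_tendsto_0_finite_support:
  assumes "\<And>n j. N \<le> j \<Longrightarrow> A n j = 0" and "\<And>j. (\<lambda>n. A n j) \<longlonglongrightarrow> 0"
  shows "(\<lambda>n. \<Sum>k. l2_term mu (A n) k) \<longlonglongrightarrow> 0"
proof -
  have "(\<lambda>n. \<Sum>j<N. l2_term mu (A n) j) \<longlonglongrightarrow> (\<Sum>j<N. (cmod 0)^2 * l2_weight mu j)"
    unfolding l2_term_def by (intro tendsto_intros assms(2))
  then show ?thesis using in_l2_finite_support(2)[OF assms(1)] by simp
qed

lemma in_l2_diff:
  assumes "in_l2 mu a" "in_l2 mu b"
  shows "in_l2 mu (\<lambda>k. a k - b k)"
    and "(\<Sum>k. l2_term mu (\<lambda>k. a k - b k) k) \<le> 2 * (\<Sum>k. l2_term mu a k) + 2 * (\<Sum>k. l2_term mu b k)"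
proof -
  have "in_l2 mu (\<lambda>k. - b k)" "l2_term mu (\<lambda>k. - b k) = l2_term mu b"
    using assms(2) by (simp_all add: in_l2_def l2_term_def fun_eq_iff)
  then show "in_l2 mu (\<lambda>k. a k - b k)"
    and "(\<Sum>k. l2_term mu (\<lambda>k. a k - b k) k) \<le> 2 * (\<Sum>k. l2_term mu a k) + 2 * (\<Sum>k. l2_term mu b k)"
    using in_l2_add[OF assms(1), of "\<lambda>k. - b k"] by simp_all
qed

lemma l2_sum_tendsto_0_add:
  assumes "\<And>n. in_l2 mu (A n)" "\<And>n. in_l2 mu (B n)"
    and "(\<lambda>n. \<Sum>k. l2_term mu (A n) k) \<longlonglongrightarrow> 0" "(\<lambda>n. \<Sum>k. l2_term mu (B n) k) \<longlonglongrightarrow> 0"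
  shows "(\<lambda>n. \<Sum>k. l2_term mu (\<lambda>k. A n k + B n k) k) \<longlonglongrightarrow> 0"
proof (rule tendsto_sandwich[OF _ _ tendsto_const])
  show "(\<lambda>n. 2 * (\<Sum>k. l2_term mu (A n) k) + 2 * (\<Sum>k. l2_term mu (B n) k)) \<longlonglongrightarrow> 0"
    using tendsto_add[OF tendsto_mult_right_zero[OF assms(3)] tendsto_mult_right_zero[OF assms(4)]]
    by simp
  show "\<forall>\<^sub>F n in sequentially. 0 \<le> (\<Sum>k. l2_term mu (\<lambda>k. A n k + B n k) k)"
    using in_l2_add(1)[OF assms(1,2)] by (simp add: suminf_nonneg l2_term_nonneg in_l2_iff_summable)
  show "\<forall>\<^sub>F n in sequentially. (\<Sum>k. l2_term mu (\<lambda>k. A n k + B n k) k) \<le>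
      2 * (\<Sum>k. l2_term mu (A n) k) + 2 * (\<Sum>k. l2_term mu (B n) k)"
    using in_l2_add(2)[OF assms(1,2)] by simp
qed

lemma l2norm_nonneg: "in_l2 mu u \<Longrightarrow> 0 \<le> l2norm mu u"
  by (simp add: l2norm_eq suminf_nonneg l2_term_nonneg in_l2_iff_summable)

lemma suminf_l2_term_le_square:
  assumes "in_l2 mu u" "l2norm mu u \<le> B"
  shows "(\<Sum>k. l2_term mu u k) \<le> B^2"
proof -
  have "0 \<le> (\<Sum>k. l2_term mu u k)"
    using assms(1) by (simp add: suminf_nonneg l2_term_nonneg in_l2_iff_summable)
  then show ?thesis
    using assms(2) power_mono[OF assms(2), of 2] by (simp add: l2norm_eq)
qed

lemma coordinatewise_convergent_subseq:
  fixes us :: "nat \<Rightarrow> cseq" and P :: "cseq \<Rightarrow> cseq"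
  assumes P_bounded: "\<And>u j. in_l2 mu u \<Longrightarrow> cmod (P u j) \<le> C j * l2norm mu u"
    and us: "\<And>n. in_l2 mu (us n)" "\<And>n. l2norm mu (us n) \<le> B"
  obtains r u p where "strict_mono r" "\<And>k. (\<lambda>n. us (r n) k) \<longlonglongrightarrow> u k"
    "\<And>k. (\<lambda>n. P (us (r n)) k) \<longlonglongrightarrow> p k"
proof -
  have "0 \<le> B" using l2norm_nonneg[OF us(1)[of 0]] us(2)[of 0] by linarith
  have "cmod (us n i) \<le> (real i + 1) powr (- mu) * B" for n i
  proof -
    have "(real i + 1) powr (- mu) * l2norm mu (us n) \<le> (real i + 1) powr (- mu) * B"
      by (rule mult_left_mono[OF us(2)]) simp
    then show ?thesis using norm_le_l2norm[OF us(1), of n i] by linarith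
  qed
  then have "bounded (range (\<lambda>n. us n i))" for i by (intro boundedI) auto
  moreover have "cmod (P (us n) i) \<le> \<bar>C i\<bar> * B" for n i
    using P_bounded[OF us(1), of n i] mult_mono[OF abs_ge_self us(2)[of n]]
      l2norm_nonneg[OF us(1)[of n]] \<open>0 \<le> B\<close> by (metis abs_ge_zero order_trans)
  then have "bounded (range (\<lambda>n. P (us n) i))" for i by (intro boundedI) auto
  ultimately have "bounded (range (\<lambda>n. (us n i, P (us n) i)))" for i
    by (rule bounded_subset[OF bounded_Times]) auto
  then obtain r where r: "strict_mono r"
    and conv: "\<And>i. convergent (\<lambda>n. (us (r n) i, P (us (r n)) i))"
    using diagonal_convergent_subseq[of "\<lambda>n i. (us n i, P (us n) i)"] by blast
  define z where "z k = lim (\<lambda>n. (us (r n) k, P (us (r n)) k))" for k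
  have z: "(\<lambda>n. (us (r n) k, P (us (r n)) k)) \<longlonglongrightarrow> z k" for k
    using conv[of k] by (simp add: z_def convergent_LIMSEQ_iff)
  have "(\<lambda>n. us (r n) k) \<longlonglongrightarrow> fst (z k)" "(\<lambda>n. P (us (r n)) k) \<longlonglongrightarrow> snd (z k)" for k
    using tendsto_fst[OF z[of k]] tendsto_snd[OF z[of k]] by simp_all
  with r show ?thesis by (rule that)
qed

lemma head_plus_banded_compact_convergent_subseq:
  fixes us :: "nat \<Rightarrow> cseq"
  assumes L: "banded_compact mu L"
    and P_head: "\<And>u j. N \<le> j \<Longrightarrow> P u j = 0"
    and P_bounded: "\<And>u j. in_l2 mu u \<Longrightarrow> cmod (P u j) \<le> C j * l2norm mu u"
    and us: "\<And>n. in_l2 mu (us n)" "\<And>n. l2norm mu (us n) \<le> B"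
  shows "\<exists>r w. strict_mono r \<and> in_l2 mu w \<and>
           (\<lambda>n. l2norm mu (\<lambda>k. P (us (r n)) k + L (us (r n)) k - w k)) \<longlonglongrightarrow> 0"
proof -
  have LB: "banded_bounded mu L" using L by (rule banded_compact_imp_bounded)
  have sum_us: "(\<Sum>k. l2_term mu (us n) k) \<le> B^2" for n by (rule suminf_l2_term_le_square[OF us])
  obtain r u p where r: "strict_mono r" and u: "\<And>k. (\<lambda>n. us (r n) k) \<longlonglongrightarrow> u k"
    and p: "\<And>k. (\<lambda>n. P (us (r n)) k) \<longlonglongrightarrow> p k"
    using coordinatewise_convergent_subseq[where P = P and us = us, OF P_bounded us] by blast
  have u_l2: "in_l2 mu u" and sum_u: "(\<Sum>k. l2_term mu u k) \<le> B^2"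
    using in_l2_pointwise_limit[OF us(1) sum_us u] r by simp_all
  define vs where "vs n k = us (r n) k - u k" for n k
  have vs: "in_l2 mu (vs n)" "(\<Sum>k. l2_term mu (vs n) k) \<le> 4 * B^2" for n
    using in_l2_diff[OF us(1)[of "r n"] u_l2] sum_us[of "r n"] sum_u
    by (simp_all add: vs_def[abs_def])
  have "(\<lambda>n. vs n k) \<longlonglongrightarrow> 0" for k
    using tendsto_diff[OF u[of k] tendsto_const[of "u k"]] by (simp add: vs_def)
  then have L_vs: "(\<lambda>n. \<Sum>k. l2_term mu (L (vs n)) k) \<longlonglongrightarrow> 0"
    by (rule banded_compact_tendsto_0[OF L vs])
  define head where "head j = (if j < N then p j else 0)" for j
  define w where "w k = head k + L u k" for k
  have "in_l2 mu head" by (rule in_l2_finite_support(1)[of N]) (simp add: head_def)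
  then have w: "in_l2 mu w"
    unfolding w_def using banded_bounded_in_l2[OF LB u_l2] by (rule in_l2_add(1))
  define A where "A n k = P (us (r n)) k - head k" for n k
  have A: "in_l2 mu (A n)" "(\<lambda>n. \<Sum>k. l2_term mu (A n) k) \<longlonglongrightarrow> 0" for n
  proof -
    have "A n j = 0" if "N \<le> j" for n j using that P_head by (simp add: A_def head_def)
    moreover have "(\<lambda>n. A n j) \<longlonglongrightarrow> 0" for j
      using tendsto_diff[OF p[of j] tendsto_const[of "head j"]] P_head[of j]
      by (cases "j < N") (simp_all add: A_def head_def)
    ultimately show "in_l2 mu (A n)" "(\<lambda>n. \<Sum>k. l2_term mu (A n) k) \<longlonglongrightarrow> 0"
      using in_l2_finite_support(1) l2_sum_tendsto_0_finite_support by blast+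
  qed
  have "(\<lambda>k. P (us (r n)) k + L (us (r n)) k - w k) = (\<lambda>k. A n k + L (vs n) k)" for n
    using linear_op_diff[OF banded_bounded_linear[OF LB], of "us (r n)" u]
    by (simp add: A_def w_def vs_def[abs_def] fun_eq_iff)
  moreover have "(\<lambda>n. \<Sum>k. l2_term mu (\<lambda>k. A n k + L (vs n) k) k) \<longlonglongrightarrow> 0"
    using A banded_bounded_in_l2[OF LB vs(1)] L_vs by (intro l2_sum_tendsto_0_add) auto
  ultimately have "(\<lambda>n. l2norm mu (\<lambda>k. P (us (r n)) k + L (us (r n)) k - w k)) \<longlonglongrightarrow> 0"
    using tendsto_real_sqrt by (fastforce simp: l2norm_eq)
  then show ?thesis using r w by blast
qed

lemma compact_op_l2_head_plus_banded_compact: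
  assumes L: "banded_compact mu L"
    and P_head: "\<And>u j. N \<le> j \<Longrightarrow> P u j = 0"
    and P_linear: "\<And>u v c. in_l2 mu u \<Longrightarrow> in_l2 mu v \<Longrightarrow>
                     P (\<lambda>k. c * u k + v k) = (\<lambda>k. c * P u k + P v k)"
    and P_bounded: "\<And>u j. in_l2 mu u \<Longrightarrow> cmod (P u j) \<le> C j * l2norm mu u"
  shows "compact_op_l2 mu (\<lambda>u j. P u j + L u j)"
  unfolding compact_op_l2_def
proof (intro conjI allI impI)
  have LB: "banded_bounded mu L" using L by (rule banded_compact_imp_bounded)
  show "in_l2 mu (\<lambda>j. P u j + L u j)" if "in_l2 mu u" for u
    using in_l2_finite_support(1)[of N "P u", OF P_head] banded_bounded_in_l2[OF LB that]
    by (rule in_l2_add(1))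
  show "(\<lambda>j. P (\<lambda>k. c * u k + v k) j + L (\<lambda>k. c * u k + v k) j) =
      (\<lambda>k. c * (P u k + L u k) + (P v k + L v k))" if "in_l2 mu u" "in_l2 mu v" for u v c
    using P_linear[OF that] banded_bounded_linear[OF LB]
    by (simp add: linear_op_def algebra_simps)
  show "\<exists>r w. strict_mono r \<and> in_l2 mu w \<and>
      (\<lambda>n. l2norm mu (\<lambda>k. P (us (r n)) k + L (us (r n)) k - w k)) \<longlonglongrightarrow> 0"
    if us: "\<forall>n. in_l2 mu (us n)" "bounded (range (\<lambda>n. l2norm mu (us n)))" for us :: "nat \<Rightarrow> cseq"
  proof -
    obtain B where "\<forall>x\<in>range (\<lambda>n. l2norm mu (us n)). norm x \<le> B"
      using us(2) unfolding bounded_iff by blast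
    then have "\<bar>l2norm mu (us n)\<bar> \<le> B" for n by simp
    then have B: "l2norm mu (us n) \<le> B" for n using abs_le_D1 by blast
    show ?thesis
      by (rule head_plus_banded_compact_convergent_subseq[where B = B and P = P and L = L and us = us
          and N = N and C = C])
        (use L P_head P_bounded us(1) B in auto)
  qed
qed

lemma linear_op_Sop: "linear_op (Sop l)"
  unfolding linear_op_def
proof (intro allI ext)
  fix u v :: cseq and c :: complex and j :: nat
  show "Sop l (\<lambda>k. c * u k + v k) j = c * Sop l u j + Sop l v j"
  proof (cases "l = 0")
    case True
    then show ?thesis by (cases "j = 0") (simp_all add: Sop_def field_simps)
  next
    case False
    define A where "A = complex_of_real (real l / real (l + j))"
    define B where "B = complex_of_real (real l / real (l + j + 2))"
    have eq: "Sop l w j = A * w j - B * w (j + 2)" for w using False by (simp add: Sop_def A_def B_def)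
    show ?thesis by (simp only: eq) (simp add: algebra_simps)
  qed
qed

lemma banded_bounded_cmult: "banded_bounded mu (\<lambda>v k. c * v k)"
  by (rule banded_bounded_if_two_entries[where d = "\<lambda>_. cmod c" and fa = id and fb = id and m = 1])
    (auto simp: linear_op_def algebra_simps norm_mult)

lemma banded_bounded_id: "banded_bounded mu id"
  using banded_bounded_cmult[of mu 1] by (simp add: id_def)

lemma banded_bounded_xmul_op: "banded_bounded mu (xmul_op l)"
proof (rule banded_bounded_if_two_entries[where d = "\<lambda>_. 1" and fa = "\<lambda>j. j - 1" and fb = Suc and m = 2])
  show "linear_op (xmul_op l)" by (auto simp: linear_op_def xmul_op_def algebra_simps)
  fix u j
  have "cmod (of_real (ultra_up l (j - 1)) * u (j - 1)) \<le> cmod (u (j - 1))"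
    "cmod (of_real (ultra_down l (Suc j)) * u (Suc j)) \<le> cmod (u (Suc j))"
    using abs_ultra_up_le_1 abs_ultra_down_le_1 by (simp_all add: norm_mult mult_left_le_one_le)
  then show "cmod (xmul_op l u j) \<le> 1 * (cmod (u (j - 1)) + cmod (u (Suc j)))"
  proof (cases "j = 0")
    case False
    then have "cmod (xmul_op l u j) \<le> cmod (of_real (ultra_up l (j - 1)) * u (j - 1))
        + cmod (of_real (ultra_down l (Suc j)) * u (Suc j))"
      unfolding xmul_op_def by (simp add: norm_triangle_ineq)
    with \<open>cmod (_ * u (j - 1)) \<le> _\<close> \<open>cmod (_ * u (Suc j)) \<le> _\<close> show ?thesis by simp
  next
    case True
    then have "cmod (xmul_op l u j) \<le> cmod (u (Suc j))"
      using \<open>cmod (_ * u (Suc j)) \<le> _\<close> by (simp add: xmul_op_def)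
    then show ?thesis by (simp add: add_increasing)
  qed
qed auto

lemma banded_bounded_Mop: "banded_bounded mu (Mop l a)"
proof (induction a rule: pCons_induct)
  case 0
  then show ?case
    using banded_compact_imp_bounded[OF banded_compact_zero] by (simp add: Mop_0[abs_def])
next
  case (pCons c a)
  have "Mop l (pCons c a) = (\<lambda>v k. c * v k + (xmul_op l \<circ> Mop l a) v k)"
    by (simp add: Mop_pCons fun_eq_iff)
  then show ?case
    using banded_bounded_add[OF banded_bounded_cmult banded_bounded_comp[OF banded_bounded_xmul_op pCons.IH]]
    by simp
qed

lemma banded_bounded_Sop_0: "banded_bounded mu (Sop 0)"
proof (rule banded_bounded_if_two_entries[where d = "\<lambda>_. 1" and D = 1 and fa = id and fb = "\<lambda>j. j + 2" and m = 3])
  fix u :: cseq and j :: nat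
  have "cmod (u j - u (j + 2) / 2) \<le> cmod (u j) + cmod (u (j + 2) / 2)" by (rule norm_triangle_ineq4)
  also have "\<dots> \<le> cmod (u j) + cmod (u (j + 2))" by (simp add: norm_divide)
  finally have "cmod (u j - u (j + 2) / 2) \<le> cmod (u j) + cmod (u (j + 2))" .
  moreover have "cmod ((u j - u (j + 2)) / 2) \<le> cmod (u j - u (j + 2))" by (simp add: norm_divide)
  then have "cmod ((u j - u (j + 2)) / 2) \<le> cmod (u j) + cmod (u (j + 2))"
    using norm_triangle_ineq4[of "u j" "u (j + 2)"] by linarith
  ultimately show "cmod (Sop 0 u j) \<le> 1 * (cmod (u (id j)) + cmod (u (j + 2)))"
    by (cases "j = 0") (simp_all add: Sop_def numeral_2_eq_2)
qed (simp_all add: linear_op_Sop)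

lemma banded_compact_Sop:
  assumes "l \<ge> 1"
  shows "banded_compact mu (Sop l)"
proof (rule banded_compact_if_two_entries[where d = "\<lambda>j. real l / (real l + real j)" and fa = id
      and fb = "\<lambda>j. j + 2" and m = 3])
  fix u j
  have "real l / (real l + real j + 2) \<le> real l / (real l + real j)"
    using assms by (intro divide_left_mono) auto
  have "cmod (Sop l u j) \<le> cmod (of_real (real l / real (l + j)) * u j)
      + cmod (of_real (real l / real (l + j + 2)) * u (j + 2))"
    using assms by (simp add: Sop_def norm_triangle_ineq4 del: of_real_divide)
  also have "\<dots> = real l / (real l + real j) * cmod (u j) + real l / (real l + real j + 2) * cmod (u (j + 2))"
    by (simp only: norm_mult norm_of_real) simp
  also have "\<dots> \<le> real l / (real l + real j) * (cmod (u j) + cmod (u (j + 2)))"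
    using mult_right_mono[OF \<open>real l / (real l + real j + 2) \<le> _\<close> norm_ge_zero[of "u (j + 2)"]]
    by (simp add: distrib_left)
  finally show "cmod (Sop l u j) \<le> real l / (real l + real j) * (cmod (u (id j)) + cmod (u (j + 2)))"
    by simp
  show "(\<lambda>j. real l / (real l + real j)) \<longlonglongrightarrow> 0" by real_asymp
qed (simp_all add: linear_op_Sop)

lemma banded_bounded_Sop: "banded_bounded mu (Sop l)"
  using banded_bounded_Sop_0 banded_compact_imp_bounded[OF banded_compact_Sop[of l]]
  by (cases "l = 0") auto

lemma banded_bounded_Schain: "banded_bounded mu (Schain lo n)"
proof (induction n)
  case (Suc n)
  then show ?case by (simp only: Schain.simps) (rule banded_bounded_comp[OF banded_bounded_Sop])
qed (simp only: Schain.simps banded_bounded_id)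

lemma banded_compact_Schain: "lo \<ge> 1 \<Longrightarrow> banded_compact mu (Schain lo (Suc n))"
  unfolding Schain.simps by (rule banded_compact_comp_right[OF banded_compact_Sop banded_bounded_Schain]) simp

definition shift_right :: "nat \<Rightarrow> cseq \<Rightarrow> cseq" where
  "shift_right N u j = (if j < N then 0 else u (j - N))"

lemma banded_bounded_shift_right: "banded_bounded mu (shift_right N)"
  by (rule banded_bounded_if_two_entries[where d = "\<lambda>_. 1" and D = 1 and fa = "\<lambda>j. j - N"
        and fb = "\<lambda>j. j - N" and m = "Suc N"])
    (auto simp: linear_op_def shift_right_def)

definition Rop_const :: "nat \<Rightarrow> real" where
  "Rop_const N = 1 / (2 ^ (N - 1) * fact (N - 1))"

lemma Rop_const_pos: "0 < Rop_const N"
  by (simp add: Rop_const_def)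

lemma norm_Rop: "cmod (Rop N u j) = Rop_const N * (if j < N then 1 else 1 / real j) * cmod (u j)"
  using Rop_const_pos[of N] by (simp add: Rop_def Rop_const_def norm_mult norm_divide norm_power)

lemma linear_op_Rop: "linear_op (Rop N)"
  unfolding linear_op_def by (intro allI ext) (simp add: Rop_def algebra_simps add_divide_distrib)

lemma banded_compact_Rop:
  assumes "N \<ge> 1"
  shows "banded_compact mu (Rop N)"
proof (rule banded_compact_if_two_entries[OF linear_op_Rop, where fa = id and fb = id and m = 1])
  define d where "d j = Rop_const N * (if j < N then 1 else 1 / real j)" for j
  show "cmod (Rop N u j) \<le> d j * (cmod (u (id j)) + cmod (u (id j)))" for u j
    using Rop_const_pos[of N] by (simp add: norm_Rop d_def)
  show "0 \<le> d j" for j using Rop_const_pos[of N] by (simp add: d_def)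
  have "(\<lambda>j. Rop_const N * (1 / real j)) \<longlonglongrightarrow> 0" by real_asymp
  moreover have "\<forall>\<^sub>F j in sequentially. Rop_const N * (1 / real j) = d j"
    unfolding eventually_sequentially d_def by (intro exI[of _ N]) auto
  ultimately show "d \<longlonglongrightarrow> 0" by (rule Lim_transform_eventually)
qed simp_all

lemma Dop_Rop_shift:
  assumes "N \<ge> 1" "N \<le> j"
  shows "Dop N (Rop N u) (j - N) = u j"
proof -
  define c where "c = (2::real) ^ (N - 1) * fact (N - 1)"
  have "c \<noteq> 0" "j \<noteq> 0" using assms by (simp_all add: c_def)
  moreover have "Dop N (Rop N u) (j - N) = of_real (c * real j) * (of_real (1 / c) * (u j / of_nat j))"
    using assms by (simp add: Dop_def Rop_def c_def)
  ultimately show ?thesis by (simp add: field_simps)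
qed

lemma banded_bounded_Dop_Rop:
  assumes "N \<ge> 1"
  shows "banded_bounded mu (Dop l \<circ> Rop N)"
proof (rule banded_bounded_if_two_entries[where fa = "\<lambda>j. j + l" and fb = "\<lambda>j. j + l" and m = "Suc l"])
  define c where "c = 2 ^ (l - 1) * fact (l - 1) * Rop_const N * real N"
  show "linear_op (Dop l \<circ> Rop N)"
    unfolding linear_op_def by (intro allI ext) (simp add: Dop_def Rop_def algebra_simps add_divide_distrib)
  fix u j
  define f where "f = (if j + l < N then 1 else 1 / real (j + l))"
  have f: "real (j + l) * f \<le> real N" using assms by (auto simp: f_def)
  have "cmod ((Dop l \<circ> Rop N) u j) =
      2 ^ (l - 1) * fact (l - 1) * Rop_const N * cmod (u (j + l)) * (real (j + l) * f)"
    by (simp add: Dop_def norm_mult norm_Rop norm_power f_def mult_ac del: of_nat_add)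
  also have "\<dots> \<le> 2 ^ (l - 1) * fact (l - 1) * Rop_const N * cmod (u (j + l)) * real N"
    using Rop_const_pos[of N] by (intro mult_left_mono[OF f]) simp
  also have "\<dots> \<le> c * (cmod (u (j + l)) + cmod (u (j + l)))"
    using Rop_const_pos[of N] by (simp add: c_def algebra_simps)
  finally show "cmod ((Dop l \<circ> Rop N) u j) \<le> c * (cmod (u (j + l)) + cmod (u (j + l)))" .
qed (use Rop_const_pos[of N] in auto)

lemma l2_term_Rop_le:
  assumes "N \<ge> 1" "D - 1 \<le> mu"
  shows "l2_term D (Rop N u) j \<le> (Rop_const N)^2 * ((real N)^2 + 4) * l2_term mu u j"
proof -
  define f where "f = (if j < N then 1 else 1 / real j)"
  have w: "l2_weight D j \<le> l2_weight mu j * (real j + 1)^2"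
  proof -
    have "l2_weight D j = (real j + 1) powr (2 * mu) * (real j + 1) powr (2 * D - 2 * mu)"
      unfolding l2_weight_def by (simp add: powr_add[symmetric])
    also have "(real j + 1) powr (2 * D - 2 * mu) \<le> (real j + 1) powr (real 2)"
      using assms(2) by (intro powr_mono) auto
    also have "(real j + 1) powr (real 2) = (real j + 1)^2" by (rule powr_realpow) simp
    finally show ?thesis by (simp add: l2_weight_def mult_left_mono)
  qed
  have f: "f^2 * (real j + 1)^2 \<le> (real N)^2 + 4"
  proof (cases "j < N")
    case True
    then have "(real j + 1)^2 \<le> (real N)^2" by (intro power_mono) auto
    then show ?thesis using True by (simp add: f_def add_increasing2)
  next
    case False
    then have "(real j + 1)^2 \<le> (2 * real j)^2" using assms(1) by (intro power_mono) auto
    then have "(real j + 1)^2 / (real j)^2 \<le> 4"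
      using False assms(1) by (simp add: divide_le_eq power_mult_distrib)
    then show ?thesis using False by (simp add: f_def power_divide add_increasing)
  qed
  have "l2_term D (Rop N u) j = (Rop_const N)^2 * f^2 * (cmod (u j))^2 * l2_weight D j"
    by (simp add: l2_term_def norm_Rop f_def power_mult_distrib)
  also have "\<dots> \<le> (Rop_const N)^2 * f^2 * (cmod (u j))^2 * (l2_weight mu j * (real j + 1)^2)"
    by (intro mult_left_mono w) simp
  also have "\<dots> = (Rop_const N)^2 * (f^2 * (real j + 1)^2) * l2_term mu u j"
    by (simp add: l2_term_def algebra_simps)
  also have "\<dots> \<le> (Rop_const N)^2 * ((real N)^2 + 4) * l2_term mu u j"
    by (intro mult_left_mono mult_right_mono f l2_term_nonneg) simp
  finally show ?thesis .
qed

lemma Rop_in_l2: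
  assumes "N \<ge> 1" "D - 1 \<le> mu" "in_l2 mu u"
  shows "in_l2 D (Rop N u)"
    and "l2norm D (Rop N u) \<le> sqrt ((Rop_const N)^2 * ((real N)^2 + 4)) * l2norm mu u"
proof -
  define c where "c = (Rop_const N)^2 * ((real N)^2 + 4)"
  have s: "summable (l2_term mu u)" using assms(3) by (simp add: in_l2_iff_summable)
  have le: "l2_term D (Rop N u) j \<le> c * l2_term mu u j" for j
    unfolding c_def by (rule l2_term_Rop_le[OF assms(1,2)])
  have s': "summable (l2_term D (Rop N u))"
    by (rule summable_comparison_test'[OF summable_mult[OF s], of 0]) (use le l2_term_nonneg in auto)
  then show "in_l2 D (Rop N u)" by (simp add: in_l2_iff_summable)
  have "(\<Sum>j. l2_term D (Rop N u) j) \<le> (\<Sum>j. c * l2_term mu u j)"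
    by (rule suminf_le[OF le s' summable_mult[OF s]])
  then have "(\<Sum>j. l2_term D (Rop N u) j) \<le> c * (\<Sum>j. l2_term mu u j)"
    using suminf_mult[OF s, of c] by simp
  then show "l2norm D (Rop N u) \<le> sqrt c * l2norm mu u"
    by (simp add: l2norm_eq real_sqrt_mult[symmetric])
qed

definition lower_terms :: "nat \<Rightarrow> (nat \<Rightarrow> complex poly) \<Rightarrow> cseq \<Rightarrow> cseq" where
  "lower_terms N a u j =
     (\<Sum>lam\<in>{1..N-1}. Schain lam (N - lam) (Mop lam (a lam) (Dop lam u)) j)
     + Schain 0 N (Mop 0 (a 0) u) j"

lemma banded_compact_lower_terms_Rop:
  assumes "N \<ge> 1"
  shows "banded_compact mu (lower_terms N a \<circ> Rop N)"
proof -
  have "banded_compact mu (\<lambda>u. Schain lam (N - lam) (Mop lam (a lam) (Dop lam (Rop N u))))"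
    if lam: "lam \<in> {1..N-1}" for lam
  proof -
    have "banded_compact mu (Schain lam (Suc (N - lam - 1)) \<circ> (Mop lam (a lam) \<circ> (Dop lam \<circ> Rop N)))"
      using lam by (intro banded_compact_comp_right banded_compact_Schain banded_bounded_comp
          banded_bounded_Mop banded_bounded_Dop_Rop assms) auto
    moreover have "Suc (N - lam - 1) = N - lam" using lam by auto
    ultimately show ?thesis by (simp only: comp_def)
  qed
  then have "banded_compact mu (\<lambda>u j. \<Sum>lam\<in>{1..N-1}. Schain lam (N - lam) (Mop lam (a lam) (Dop lam (Rop N u))) j)"
    by (intro banded_compact_sum) (simp_all add: comp_def)
  moreover have "banded_compact mu ((Schain 0 N \<circ> Mop 0 (a 0)) \<circ> Rop N)"
    by (intro banded_compact_comp_left banded_bounded_comp banded_bounded_Schain banded_bounded_Mop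
        banded_compact_Rop assms)
  ultimately have "banded_compact mu (\<lambda>u j.
      (\<Sum>lam\<in>{1..N-1}. Schain lam (N - lam) (Mop lam (a lam) (Dop lam (Rop N u))) j)
      + (Schain 0 N \<circ> Mop 0 (a 0) \<circ> Rop N) u j)"
    by (rule banded_compact_add)
  then show ?thesis by (simp add: lower_terms_def[abs_def] comp_def)
qed

lemma block_Rop_minus_id:
  assumes "N \<ge> 1"
  shows "blockop N B (Lop N a) (Rop N u) j - u j =
    (if j < N then B (Rop N u) j - u j else 0) + shift_right N (lower_terms N a (Rop N u)) j"
  using Dop_Rop_shift[OF assms, of j u]
  by (simp add: blockop_def shift_right_def Lop_def lower_terms_def add.assoc)

lemma norm_le_sqrt_sum_squares:
  fixes x :: "nat \<Rightarrow> complex"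
  assumes "i < N"
  shows "cmod (x i) \<le> sqrt (\<Sum>i<N. (cmod (x i))^2)"
proof -
  have "(cmod (x i))^2 \<le> (\<Sum>i<N. (cmod (x i))^2)"
    using assms by (intro member_le_sum) simp_all
  then show ?thesis using real_sqrt_le_mono by fastforce
qed

lemma boundary_rows_bound:
  assumes "N \<ge> 1" "D - 1 \<le> mu" "in_l2 mu u" "j < N"
    and B: "\<forall>u. in_l2 D u \<longrightarrow> sqrt (\<Sum>i<N. (cmod (B u i))^2) \<le> C * l2norm D u"
  shows "cmod (B (Rop N u) j - u j) \<le>
    (\<bar>C\<bar> * sqrt ((Rop_const N)^2 * ((real N)^2 + 4)) + (real j + 1) powr (- mu)) * l2norm mu u"
proof -
  have R: "in_l2 D (Rop N u)" "l2norm D (Rop N u) \<le> sqrt ((Rop_const N)^2 * ((real N)^2 + 4)) * l2norm mu u"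
    using Rop_in_l2[OF assms(1-3)] by simp_all
  have "cmod (B (Rop N u) j) \<le> C * l2norm D (Rop N u)"
    using norm_le_sqrt_sum_squares[OF assms(4), of "B (Rop N u)"] B R(1) by fastforce
  also have "\<dots> \<le> \<bar>C\<bar> * l2norm D (Rop N u)"
    using l2norm_nonneg[OF R(1)] by (simp add: mult_right_mono)
  also have "\<dots> \<le> \<bar>C\<bar> * sqrt ((Rop_const N)^2 * ((real N)^2 + 4)) * l2norm mu u"
    using R(2) by (simp add: mult_left_mono mult.assoc)
  finally show ?thesis
    using norm_triangle_ineq4[of "B (Rop N u) j" "u j"] norm_le_l2norm[OF assms(3), of j]
    by (simp add: distrib_right)
qed

lemma boundary_rows_linear:
  assumes "N \<ge> 1" "D - 1 \<le> mu" "in_l2 mu u" "in_l2 mu v" "j < N"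
    and B: "\<And>u v c i. in_l2 D u \<Longrightarrow> in_l2 D v \<Longrightarrow> i < N \<Longrightarrow>
              B (\<lambda>k. c * u k + v k) i = c * B u i + B v i"
  shows "B (Rop N (\<lambda>k. c * u k + v k)) j = c * B (Rop N u) j + B (Rop N v) j"
proof -
  have "Rop N (\<lambda>k. c * u k + v k) = (\<lambda>k. c * Rop N u k + Rop N v k)"
    using linear_op_Rop unfolding linear_op_def by blast
  then show ?thesis
    using B[OF Rop_in_l2(1)[OF assms(1-3)] Rop_in_l2(1)[OF assms(1,2,4)] assms(5)] by simp
qed

theorem lemma4p3:
  fixes N :: nat and a :: "nat \<Rightarrow> complex poly" and B :: "cseq \<Rightarrow> cseq" and D :: int
  assumes N: "N \<ge> 1"
    and B_linear: "\<And>u v c i. in_l2 (of_int D) u \<Longrightarrow> in_l2 (of_int D) v \<Longrightarrow> i < N \<Longrightarrow>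
                      B (\<lambda>k. c * u k + v k) i = c * B u i + B v i"
    and B_bounded: "\<exists>C. \<forall>u. in_l2 (of_int D) u \<longrightarrow>
                      sqrt (\<Sum>i<N. (cmod (B u i))^2) \<le> C * l2norm (of_int D) u"
  shows "\<forall>lam::int. lam \<ge> D - 1 \<longrightarrow>
           compact_op_l2 (of_int lam) (\<lambda>u k. blockop N B (Lop N a) (Rop N u) k - u k)"
proof (intro allI impI)
  fix lam :: int assume "lam \<ge> D - 1"
  then have mu: "real_of_int D - 1 \<le> real_of_int lam" by linarith
  obtain C where C: "\<forall>u. in_l2 (of_int D) u \<longrightarrow> sqrt (\<Sum>i<N. (cmod (B u i))^2) \<le> C * l2norm (of_int D) u"
    using B_bounded by blast
  define P where "P u j = (if j < N then B (Rop N u) j - u j else 0)" for u j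
  have "compact_op_l2 (of_int lam) (\<lambda>u j. P u j + (shift_right N \<circ> (lower_terms N a \<circ> Rop N)) u j)"
  proof (rule compact_op_l2_head_plus_banded_compact[where N = N])
    show "banded_compact (of_int lam) (shift_right N \<circ> (lower_terms N a \<circ> Rop N))"
      by (intro banded_compact_comp_left banded_bounded_shift_right banded_compact_lower_terms_Rop N)
    show "P (\<lambda>k. c * u k + v k) = (\<lambda>k. c * P u k + P v k)"
      if "in_l2 (of_int lam) u" "in_l2 (of_int lam) v" for u v c
    proof -
      have "B (Rop N (\<lambda>k. c * u k + v k)) j = c * B (Rop N u) j + B (Rop N v) j" if "j < N" for j
        using N mu \<open>in_l2 _ u\<close> \<open>in_l2 _ v\<close> that B_linear by (rule boundary_rows_linear)
      then show ?thesis by (simp add: P_def fun_eq_iff algebra_simps)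
    qed
    show "cmod (P u j) \<le> (\<bar>C\<bar> * sqrt ((Rop_const N)^2 * ((real N)^2 + 4)) + (real j + 1) powr (- lam))
        * l2norm (of_int lam) u" if "in_l2 (of_int lam) u" for u j
      using boundary_rows_bound[OF N mu that _ C] l2norm_nonneg[OF that] by (simp add: P_def)
  qed (simp add: P_def)
  then show "compact_op_l2 (of_int lam) (\<lambda>u k. blockop N B (Lop N a) (Rop N u) k - u k)"
    by (simp add: block_Rop_minus_id[OF N] P_def)
qed

end
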